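(* Let $H=(S_1,\dots,S_\ell)$ be a partial route. Then there exist $(\alpha,\beta)\in\mathcal{A}$ such that the projected scenario recourse inequality $$\sum_{v\in V_+:\,w_v>0}\phi_v(\alpha,\beta)\,\theta_v\ \ge\ \sum_{\xi\in[N]}\sum_{\emptyset\ne S\subseteq V_+}\alpha^\xi_S\,x(E(S))+\nu(\alpha,\beta)$$ dominates the inequality $\theta(V_+(H))\ge\mathcal{L}^*(H)\cdot W_{OF}(x;H)$, in the sense that for every $\bar x\in\mathcal{X}$, every $\theta\in\mathbb{R}^{V_+}_{\ge0}$ satisfying the projected inequality at $x=\bar x$ satisfies $\theta(V_+(H))\ge\mathcal{L}^*(H)\,W_{OF}(\bar x;H)$. In particular, $\theta(V_+(H))\ge\mathcal{L}^*(H)\,W_{OF}(x;H)$ is valid for $\mathcal{P}$.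
   Context: $G=(V,E)$ complete undirected graph, $V=\{0\}\cup V_+$ ($V_+$ customers); capacity $C>0$; scenarios $\xi\in[N]$ with demands $d^\xi\in\mathbb{Q}^{V_+}_{\ge0}$ ($d^\xi(v)\le C$) and probabilities $p_\xi\ge0$, $\sum_\xi p_\xi=1$. $f(S)=\sum_{i\in S}f(i)$; $k_\xi(S)=\lceil d^\xi(S)/C\rceil$; $\bar d=\sum_\xi p_\xi d^\xi$. $E(S)$: edges with both ends in $S$; $E(S,T)$: edges with one end in $S$ and one in $T$; $\delta(S)$: edges with exactly one end in $S$. $\mathcal{X}$ is one of $\mathcal{X}_{\mathrm{sub}}=\{x\in[0,2]^E: x(\delta(v))=2\ \forall v\in V_+,\ x(E(S))\le|S|-1\ \forall\emptyset\ne S\subseteq V_+\}$ or $\mathcal{X}_{\mathrm{cvrp}}=\mathcal{X}_{\mathrm{sub}}\cap\{x:x(\delta(0))=2k,\ x(E(S))\le|S|-\lceil\bar d(S)/C\rceil\}$. Fixed $w\in\mathbb{Q}^{V_+}_{\ge0}$, $b\in\mathbb{Z}^{V_+}_{\ge0}$ such that for every route $R$ the set $\Pi(R)\cap[\mathbf 0,b]^N$ is nonempty, where $\Pi(R)$ is the set of integer $y\ge0$ in $\mathbb{R}^{[N]\times V_+}$ such that for each $\xi$ and route $R=(v_1,\dots,v_\ell)$ (with $v_0=v_{\ell+1}=0$) there exist $f_{(v_{i-1},v_i)}\in[0,C]$ and $g_{v_i}\ge0$ with $f_{(v_{i-1},v_i)}+d^\xi(v_i)=f_{(v_i,v_{i+1})}+g_{v_i}$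 and $g_{v_i}\le Cy^\xi_{v_i}$; $[\mathbf 0,b]^N=\{y:0\le y^\xi_v\le b_v\}$. A partial route $H=(S_1,\dots,S_\ell)$ is a tuple of pairwise disjoint nonempty customer sets with no index $i$ such that both $S_i$ and $S_{i+1}$ are non-singletons; $V_+(H)=\bigcup_iS_i$; $H'\subseteq H$ means $H'=(S_i,\dots,S_j)$ with $1\le i\le j\le\ell$. $x(H)=\sum_{i\in[\ell]}x(E(S_i))+\sum_{i\in[\ell-1]}x(E(S_i,S_{i+1}))$ and $W_{OF}(x;H)=1+(x(H)-|V_+(H)|+1)+\sum_{i\in\{2,\ell-1\}\cap[\ell]}(x(E(S_i))-|S_i|+1)$. For each $\xi$, $\mathcal{L}^*_\xi(H)=\min\{\sum_{v\in V_+(H)}w_vy_v:\ y(V_+(H'))\ge k_\xi(V_+(H'))-1\ \forall H'\subseteq H,\ y_v\le b_v\ \forall v\in V_+,\ y\ge0\}$, and $\mathcal{L}^*(H)=\sum_\xi p_\xi\mathcal{L}^*_\xi(H)$. Multipliers $\alpha=(\alpha^\xi_S)_{\xi,\emptyset\ne S\subseteq V_+}$, $\beta=(\beta^\xi_v)$; $\nu(\alpha,\beta)=\sum_\xi\sum_S\alpha^\xi_S(k_\xi(S)-|S|)+\sum_\xi\sum_v\beta^\xi_vb_v$; for $w_v>0$, $\phi_v(\alpha,\beta)=\big(\max_{\xi}\frac{\beta^\xi_v+\sum_{S\ni v}\alpha^\xi_S}{p_\xi w_v}\big)^+$ (where $(a)^+=\max\{a,0\}$). $\mathcal{A}$: set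 of $(\alpha,\beta)$ with $\alpha\ge0$, $\beta\le0$, and $\beta^\xi_v+\sum_{S\ni v}\alpha^\xi_S\le0$ for all $\xi$ and all $v$ with $w_v=0$. $\mathcal{P}$ is the set of $(x,\theta)$ with $x\in\mathcal{X}$ such that there exists $y\in[\mathbf 0,b]^N$ with $y^\xi(S)\ge k_\xi(S)+x(E(S))-|S|$ for all $\emptyset\ne S\subseteq V_+$, $\xi$, and $\theta\ge0$, $\theta_v\ge\sum_\xi p_\xi w_vy^\xi_v$ for all $v$. *)

theory Defs
  imports Main "HOL.Real"
begin

text \<open>Vertices are natural numbers; the depot is 0 and the customers form a finite
  set Vp with 0 not in Vp.\<close>

definition edges :: "nat set \<Rightarrow> nat set set" where
  "edges Vp = {{u, v} | u v. u \<in> insert 0 Vp \<and> v \<in> insert 0 Vp \<and> u \<noteq> v}"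

definition EE :: "nat set \<Rightarrow> nat set \<Rightarrow> nat set set" where
  "EE Vp S = {e \<in> edges Vp. e \<subseteq> S}"

definition EST :: "nat set \<Rightarrow> nat set \<Rightarrow> nat set \<Rightarrow> nat set set" where
  "EST Vp S T = {e \<in> edges Vp. \<exists>u\<in>S. \<exists>v\<in>T. e = {u, v}}"

definition delta :: "nat set \<Rightarrow> nat set \<Rightarrow> nat set set" where
  "delta Vp S = {e \<in> edges Vp. card (e \<inter> S) = 1}"

definition nesubs :: "nat set \<Rightarrow> nat set set" where
  "nesubs Vp = Pow Vp - {{}}"

definition kk :: "real \<Rightarrow> (nat \<Rightarrow> nat \<Rightarrow> real) \<Rightarrow> nat \<Rightarrow> nat set \<Rightarrow> int" where
  "kk C d \<xi> S = \<lceil>(\<Sum>i\<in>S. d \<xi> i) / C\<rceil>"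

definition dbar :: "nat \<Rightarrow> (nat \<Rightarrow> real) \<Rightarrow> (nat \<Rightarrow> nat \<Rightarrow> real) \<Rightarrow> nat set \<Rightarrow> real" where
  "dbar N p d S = (\<Sum>\<xi>\<in>{1..N}. p \<xi> * (\<Sum>i\<in>S. d \<xi> i))"

definition Xsub :: "nat set \<Rightarrow> (nat set \<Rightarrow> real) set" where
  "Xsub Vp = {x. (\<forall>e\<in>edges Vp. 0 \<le> x e \<and> x e \<le> 2)
      \<and> (\<forall>v\<in>Vp. sum x (delta Vp {v}) = 2)
      \<and> (\<forall>S\<in>nesubs Vp. sum x (EE Vp S) \<le> real (card S) - 1)}"

definition Xcvrp :: "nat set \<Rightarrow> nat \<Rightarrow> (nat \<Rightarrow> real) \<Rightarrow> (nat \<Rightarrow> nat \<Rightarrow> real) \<Rightarrow> real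
      \<Rightarrow> nat \<Rightarrow> (nat set \<Rightarrow> real) set" where
  "Xcvrp Vp N p d C k = Xsub Vp \<inter> {x. sum x (delta Vp {0}) = 2 * real k
      \<and> (\<forall>S\<in>nesubs Vp. sum x (EE Vp S) \<le> real (card S) - real_of_int \<lceil>dbar N p d S / C\<rceil>)}"

definition is_route :: "nat set \<Rightarrow> nat list \<Rightarrow> bool" where
  "is_route Vp R \<longleftrightarrow> R \<noteq> [] \<and> distinct R \<and> set R \<subseteq> Vp"

text \<open>Flow condition of Pi(R) for one scenario: R = (v_1,...,v_l) is R!0..R!(l-1);
  f i is the flow on arc (v_i, v_(i+1)) for i = 0..l (with v_0 = v_(l+1) = depot);
  g i is the unloaded quantity at v_i.\<close>
definition route_flow :: "real \<Rightarrow> (nat \<Rightarrow> nat \<Rightarrow> real) \<Rightarrow> nat \<Rightarrow> nat list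
      \<Rightarrow> (nat \<Rightarrow> nat \<Rightarrow> nat) \<Rightarrow> bool" where
  "route_flow C d \<xi> R y \<longleftrightarrow> (\<exists>f g :: nat \<Rightarrow> real.
      (\<forall>i\<le>length R. 0 \<le> f i \<and> f i \<le> C)
    \<and> (\<forall>i\<in>{1..length R}. f (i - 1) + d \<xi> (R ! (i - 1)) = f i + g i
          \<and> 0 \<le> g i \<and> g i \<le> C * real (y \<xi> (R ! (i - 1)))))"

definition PiR :: "real \<Rightarrow> nat \<Rightarrow> (nat \<Rightarrow> nat \<Rightarrow> real) \<Rightarrow> nat list \<Rightarrow> (nat \<Rightarrow> nat \<Rightarrow> nat) set" where
  "PiR C N d R = {y. \<forall>\<xi>\<in>{1..N}. route_flow C d \<xi> R y}"

definition in_box :: "nat set \<Rightarrow> nat \<Rightarrow> (nat \<Rightarrow> nat) \<Rightarrow> (nat \<Rightarrow> nat \<Rightarrow> 'a::linordered_semidom) \<Rightarrow> bool" where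
  "in_box Vp N b y \<longleftrightarrow> (\<forall>\<xi>\<in>{1..N}. \<forall>v\<in>Vp. 0 \<le> y \<xi> v \<and> y \<xi> v \<le> of_nat (b v))"

definition partial_route :: "nat set \<Rightarrow> nat set list \<Rightarrow> bool" where
  "partial_route Vp H \<longleftrightarrow> H \<noteq> []
     \<and> (\<forall>i<length H. H ! i \<noteq> {} \<and> H ! i \<subseteq> Vp)
     \<and> (\<forall>i<length H. \<forall>j<length H. i \<noteq> j \<longrightarrow> H ! i \<inter> H ! j = {})
     \<and> (\<forall>i. Suc i < length H \<longrightarrow> card (H ! i) = 1 \<or> card (H ! Suc i) = 1)"

definition VH :: "nat set list \<Rightarrow> nat set" where
  "VH H = \<Union> (set H)"

text \<open>The sub-partial-route (S_(i+1),...,S_(j+1)) (0-based list indices i..j).\<close>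
definition subroute :: "nat set list \<Rightarrow> nat \<Rightarrow> nat \<Rightarrow> nat set list" where
  "subroute H i j = take (Suc j - i) (drop i H)"

definition xH :: "nat set \<Rightarrow> (nat set \<Rightarrow> real) \<Rightarrow> nat set list \<Rightarrow> real" where
  "xH Vp x H = (\<Sum>i<length H. sum x (EE Vp (H ! i)))
             + (\<Sum>i<length H - 1. sum x (EST Vp (H ! i) (H ! Suc i)))"

text \<open>W_OF(x;H), indices i in {2, l-1} \<inter> [l] are 1-based (S_i = H!(i-1)).\<close>
definition W_OF :: "nat set \<Rightarrow> (nat set \<Rightarrow> real) \<Rightarrow> nat set list \<Rightarrow> real" where
  "W_OF Vp x H = 1 + (xH Vp x H - real (card (VH H)) + 1)
     + (\<Sum>i\<in>{2, length H - 1} \<inter> {1..length H}.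
          sum x (EE Vp (H ! (i - 1))) - real (card (H ! (i - 1))) + 1)"

definition Lstar_xi :: "nat set \<Rightarrow> (nat \<Rightarrow> real) \<Rightarrow> (nat \<Rightarrow> nat) \<Rightarrow> real
     \<Rightarrow> (nat \<Rightarrow> nat \<Rightarrow> real) \<Rightarrow> nat \<Rightarrow> nat set list \<Rightarrow> real" where
  "Lstar_xi Vp w b C d \<xi> H = Inf {(\<Sum>v\<in>VH H. w v * y v) | y :: nat \<Rightarrow> real.
      (\<forall>i j. i \<le> j \<and> j < length H \<longrightarrow>
          sum y (VH (subroute H i j)) \<ge> real_of_int (kk C d \<xi> (VH (subroute H i j))) - 1)
    \<and> (\<forall>v\<in>Vp. 0 \<le> y v \<and> y v \<le> real (b v))}"

definition Lstar :: "nat set \<Rightarrow> nat \<Rightarrow> (nat \<Rightarrow> real) \<Rightarrow> (nat \<Rightarrow> real) \<Rightarrow> (nat \<Rightarrow> nat) \<Rightarrow> real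
     \<Rightarrow> (nat \<Rightarrow> nat \<Rightarrow> real) \<Rightarrow> nat set list \<Rightarrow> real" where
  "Lstar Vp N p w b C d H = (\<Sum>\<xi>\<in>{1..N}. p \<xi> * Lstar_xi Vp w b C d \<xi> H)"

definition colsum :: "nat set \<Rightarrow> (nat \<Rightarrow> nat set \<Rightarrow> real) \<Rightarrow> (nat \<Rightarrow> nat \<Rightarrow> real) \<Rightarrow> nat \<Rightarrow> nat \<Rightarrow> real" where
  "colsum Vp \<alpha> \<beta> \<xi> v = \<beta> \<xi> v + (\<Sum>S\<in>{S\<in>nesubs Vp. v \<in> S}. \<alpha> \<xi> S)"

definition nu :: "nat set \<Rightarrow> nat \<Rightarrow> (nat \<Rightarrow> nat) \<Rightarrow> real \<Rightarrow> (nat \<Rightarrow> nat \<Rightarrow> real)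
     \<Rightarrow> (nat \<Rightarrow> nat set \<Rightarrow> real) \<Rightarrow> (nat \<Rightarrow> nat \<Rightarrow> real) \<Rightarrow> real" where
  "nu Vp N b C d \<alpha> \<beta> =
     (\<Sum>\<xi>\<in>{1..N}. \<Sum>S\<in>nesubs Vp. \<alpha> \<xi> S * (real_of_int (kk C d \<xi> S) - real (card S)))
   + (\<Sum>\<xi>\<in>{1..N}. \<Sum>v\<in>Vp. \<beta> \<xi> v * real (b v))"

definition phi :: "nat set \<Rightarrow> nat \<Rightarrow> (nat \<Rightarrow> real) \<Rightarrow> (nat \<Rightarrow> real)
     \<Rightarrow> (nat \<Rightarrow> nat set \<Rightarrow> real) \<Rightarrow> (nat \<Rightarrow> nat \<Rightarrow> real) \<Rightarrow> nat \<Rightarrow> real" where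
  "phi Vp N p w \<alpha> \<beta> v =
     max 0 (Max ((\<lambda>\<xi>. colsum Vp \<alpha> \<beta> \<xi> v / (p \<xi> * w v)) ` {1..N}))"

definition inA :: "nat set \<Rightarrow> nat \<Rightarrow> (nat \<Rightarrow> real)
     \<Rightarrow> (nat \<Rightarrow> nat set \<Rightarrow> real) \<Rightarrow> (nat \<Rightarrow> nat \<Rightarrow> real) \<Rightarrow> bool" where
  "inA Vp N w \<alpha> \<beta> \<longleftrightarrow>
     (\<forall>\<xi>\<in>{1..N}. \<forall>S\<in>nesubs Vp. 0 \<le> \<alpha> \<xi> S)
   \<and> (\<forall>\<xi>\<in>{1..N}. \<forall>v\<in>Vp. \<beta> \<xi> v \<le> 0)
   \<and> (\<forall>\<xi>\<in>{1..N}. \<forall>v\<in>Vp. w v = 0 \<longrightarrow> colsum Vp \<alpha> \<beta> \<xi> v \<le> 0)"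

definition proj_ineq :: "nat set \<Rightarrow> nat \<Rightarrow> (nat \<Rightarrow> real) \<Rightarrow> (nat \<Rightarrow> real) \<Rightarrow> (nat \<Rightarrow> nat)
     \<Rightarrow> real \<Rightarrow> (nat \<Rightarrow> nat \<Rightarrow> real) \<Rightarrow> (nat \<Rightarrow> nat set \<Rightarrow> real) \<Rightarrow> (nat \<Rightarrow> nat \<Rightarrow> real)
     \<Rightarrow> (nat set \<Rightarrow> real) \<Rightarrow> (nat \<Rightarrow> real) \<Rightarrow> bool" where
  "proj_ineq Vp N p w b C d \<alpha> \<beta> x \<theta> \<longleftrightarrow>
     (\<Sum>v\<in>{v\<in>Vp. w v > 0}. phi Vp N p w \<alpha> \<beta> v * \<theta> v)
       \<ge> (\<Sum>\<xi>\<in>{1..N}. \<Sum>S\<in>nesubs Vp. \<alpha> \<xi> S * sum x (EE Vp S)) + nu Vp N b C d \<alpha> \<beta>"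

definition inP :: "nat set \<Rightarrow> nat \<Rightarrow> (nat \<Rightarrow> real) \<Rightarrow> (nat \<Rightarrow> real) \<Rightarrow> (nat \<Rightarrow> nat)
     \<Rightarrow> real \<Rightarrow> (nat \<Rightarrow> nat \<Rightarrow> real) \<Rightarrow> (nat set \<Rightarrow> real) set
     \<Rightarrow> (nat set \<Rightarrow> real) \<Rightarrow> (nat \<Rightarrow> real) \<Rightarrow> bool" where
  "inP Vp N p w b C d X x \<theta> \<longleftrightarrow> x \<in> X \<and>
     (\<exists>y :: nat \<Rightarrow> nat \<Rightarrow> real. in_box Vp N b y
        \<and> (\<forall>\<xi>\<in>{1..N}. \<forall>S\<in>nesubs Vp.
             sum (y \<xi>) S \<ge> real_of_int (kk C d \<xi> S) + sum x (EE Vp S) - real (card S))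
        \<and> (\<forall>v\<in>Vp. 0 \<le> \<theta> v \<and> \<theta> v \<ge> (\<Sum>\<xi>\<in>{1..N}. p \<xi> * w v * y \<xi> v)))"

end

theory Submission
  imports Defs
begin

text \<open>Write \<open>W\<^sub>O\<^sub>F(x; H) = 1 - \<sigma>(x)\<close>. The degree and subtour constraints of \<open>X\<^sub>s\<^sub>u\<^sub>b\<close>,
  applied along the alternation of singletons and larger parts in \<open>H\<close>, show that every
  sub-partial-route \<open>H'\<close> violates \<open>x(E(V\<^sub>+(H'))) \<le> |V\<^sub>+(H')| - 1\<close> by at most \<open>\<sigma>(x)\<close>.
  So for \<open>(x, \<theta>) \<in> P\<close> each recourse vector \<open>y\<^sup>\<xi>\<close> satisfies the constraints of the LP defining
  \<open>L\<^sup>*\<^sub>\<xi>(H)\<close> up to \<open>\<sigma>\<close>; since \<open>k\<^sub>\<xi>\<close> and \<open>b\<close> are integral, scaling \<open>y\<^sup>\<xi>\<close> by \<open>1/(1 - \<sigma>)\<close> and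
  capping it at \<open>b\<close> makes it feasible, whence \<open>\<theta>(V\<^sub>+(H)) \<ge> (1 - \<sigma>) L\<^sup>*(H)\<close>.
  The projected inequality comes from dualising this argument: LP duality (via Farkas' lemma)
  gives dual solutions \<open>(\<pi>\<^sub>\<xi>, \<mu>\<^sub>\<xi>)\<close> of value \<open>L\<^sup>*\<^sub>\<xi>(H)\<close> with \<open>\<Sum> \<pi>\<^sub>\<xi> \<le> L\<^sup>*\<^sub>\<xi>(H)\<close>, and
  \<open>\<alpha>\<^sup>\<xi>\<^sub>S = p\<^sub>\<xi> \<Sum>{\<pi>\<^sub>\<xi>(H') | V\<^sub>+(H') = S}\<close>, \<open>\<beta>\<^sup>\<xi>\<^sub>v = -p\<^sub>\<xi> \<mu>\<^sub>\<xi>(v)\<close> give \<open>\<phi>\<^sub>v \<le> [v \<in> V\<^sub>+(H)]\<close>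
  and a right-hand side of at least \<open>L\<^sup>*(H) W\<^sub>O\<^sub>F(x; H)\<close>.\<close>

section \<open>Farkas' lemma by Fourier--Motzkin elimination\<close>

inductive conic_comb :: "(('v \<Rightarrow> real) \<times> real) set \<Rightarrow> ('v \<Rightarrow> real) \<times> real \<Rightarrow> bool"
  for R where
  conic_comb_base: "r \<in> R \<Longrightarrow> conic_comb R r"
| conic_comb_add: "conic_comb R (a, c) \<Longrightarrow> conic_comb R (a', c') \<Longrightarrow>
    conic_comb R (\<lambda>q. a q + a' q, c + c')"
| conic_comb_scale: "conic_comb R (a, c) \<Longrightarrow> 0 \<le> t \<Longrightarrow> conic_comb R (\<lambda>q. t * a q, t * c)"

lemma conic_comb_trans:
  assumes "conic_comb R' r" and "\<And>r. r \<in> R' \<Longrightarrow> conic_comb R r"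
  shows "conic_comb R r"
  using assms by (induction rule: conic_comb.induct) (auto intro: conic_comb.intros)

definition satisfies :: "'v set \<Rightarrow> ('v \<Rightarrow> real) \<Rightarrow> ('v \<Rightarrow> real) \<times> real \<Rightarrow> bool" where
  "satisfies V x r \<longleftrightarrow> (\<Sum>q\<in>V. fst r q * x q) \<le> snd r"

definition fm_combine :: "'v \<Rightarrow> ('v \<Rightarrow> real) \<times> real \<Rightarrow> ('v \<Rightarrow> real) \<times> real \<Rightarrow> ('v \<Rightarrow> real) \<times> real"
  where "fm_combine v r s =
    (\<lambda>q. - fst s v * fst r q + fst r v * fst s q, - fst s v * snd r + fst r v * snd s)"

definition fm_eliminate :: "'v \<Rightarrow> (('v \<Rightarrow> real) \<times> real) set \<Rightarrow> (('v \<Rightarrow> real) \<times> real) set" where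
  "fm_eliminate v R = {r \<in> R. fst r v = 0}
     \<union> (\<lambda>(r, s). fm_combine v r s) ` ({r \<in> R. fst r v > 0} \<times> {s \<in> R. fst s v < 0})"

lemma finite_fm_eliminate: "finite R \<Longrightarrow> finite (fm_eliminate v R)"
  unfolding fm_eliminate_def by auto

lemma fm_eliminate_coeff: "r \<in> fm_eliminate v R \<Longrightarrow> fst r v = 0"
  unfolding fm_eliminate_def fm_combine_def by (auto simp: mult.commute)

lemma conic_comb_coeff:
  assumes "conic_comb R r" "\<forall>s\<in>R. fst s v = 0"
  shows "fst r v = 0"
  using assms by (induction rule: conic_comb.induct) auto

lemma fm_eliminate_conic_comb:
  assumes "r \<in> fm_eliminate v R"
  shows "conic_comb R r"
  using assms unfolding fm_eliminate_def
proof (elim UnE imageE)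
  fix rs assume "rs \<in> {r \<in> R. fst r v > 0} \<times> {s \<in> R. fst s v < 0}"
    and "r = (\<lambda>(r, s). fm_combine v r s) rs"
  then obtain a c a' c' where "(a, c) \<in> R" "(a', c') \<in> R" "a v > 0" "a' v < 0"
    and r: "r = fm_combine v (a, c) (a', c')" by auto
  then have "conic_comb R (\<lambda>q. (- a' v) * a q + a v * a' q, (- a' v) * c + a v * c')"
    by (intro conic_comb_add conic_comb_scale conic_comb_base) auto
  then show ?thesis unfolding r fm_combine_def by simp
qed (auto intro: conic_comb_base)

lemma exists_between_finite:
  fixes A B :: "real set"
  assumes "finite A" "finite B" "\<forall>a\<in>A. \<forall>b\<in>B. a \<le> b"
  obtains t where "\<forall>a\<in>A. a \<le> t" "\<forall>b\<in>B. t \<le> b"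
proof (cases "A = {}")
  case True
  then show ?thesis using that[of "if B = {} then 0 else Min B"] assms(2) by auto
next
  case False
  then show ?thesis using that[of "Max A"] assms by auto
qed

text \<open>Each constraint with a positive (negative) coefficient at \<open>v\<close> bounds the new coordinate
  from above (below); the combined constraints say exactly that every lower bound is below every
  upper bound.\<close>
lemma fm_eliminate_solution_extends:
  assumes R: "finite R" and v: "v \<notin> V" and fin: "finite V"
    and x: "\<forall>r\<in>fm_eliminate v R. satisfies V x r"
  obtains t where "\<forall>r\<in>R. satisfies (insert v V) (x(v := t)) r"
proof -
  define Rp where "Rp = {r \<in> R. fst r v > 0}"
  define Rn where "Rn = {r \<in> R. fst r v < 0}"
  define ev where "ev r = (\<Sum>q\<in>V. fst r q * x q)" for r :: "('a \<Rightarrow> real) \<times> real"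
  define bound where "bound r = (snd r - ev r) / fst r v" for r :: "('a \<Rightarrow> real) \<times> real"
  have "bound s \<le> bound r" if r: "r \<in> Rp" and s: "s \<in> Rn" for r s
  proof -
    have "fm_combine v r s \<in> fm_eliminate v R"
      using r s unfolding fm_eliminate_def Rp_def Rn_def by auto
    then have "(\<Sum>q\<in>V. (- fst s v * fst r q + fst r v * fst s q) * x q)
        \<le> - fst s v * snd r + fst r v * snd s"
      using x unfolding satisfies_def fm_combine_def by auto
    moreover have "(\<Sum>q\<in>V. (- fst s v * fst r q + fst r v * fst s q) * x q)
        = - fst s v * ev r + fst r v * ev s"
      unfolding ev_def sum_distrib_left sum.distrib[symmetric]
      by (rule sum.cong) (simp_all add: algebra_simps)
    ultimately have "- fst s v * ev r + fst r v * ev s \<le> - fst s v * snd r + fst r v * snd s"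
      by simp
    moreover have "fst r v > 0" "fst s v < 0" using r s unfolding Rp_def Rn_def by auto
    ultimately show ?thesis unfolding bound_def by (simp add: field_simps)
  qed
  then have "\<forall>a\<in>bound ` Rn. \<forall>b\<in>bound ` Rp. a \<le> b" by blast
  moreover have "finite (bound ` Rn)" "finite (bound ` Rp)" using R unfolding Rp_def Rn_def by auto
  ultimately obtain t where lo: "\<forall>s\<in>Rn. bound s \<le> t" and up: "\<forall>r\<in>Rp. t \<le> bound r"
    using exists_between_finite by (metis (no_types, lifting) image_eqI)
  have "satisfies (insert v V) (x(v := t)) r" if r: "r \<in> R" for r
  proof -
    have "(\<Sum>q\<in>V. fst r q * (x(v := t)) q) = ev r"
      unfolding ev_def using v by (intro sum.cong) auto
    then have eq: "(\<Sum>q\<in>insert v V. fst r q * (x(v := t)) q) = fst r v * t + ev r"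
      using v fin by simp
    consider "fst r v = 0" | "fst r v > 0" | "fst r v < 0" by linarith
    then show ?thesis
    proof cases
      case 1
      then have "r \<in> fm_eliminate v R" using r unfolding fm_eliminate_def by auto
      then show ?thesis using x eq 1 unfolding satisfies_def ev_def by auto
    next
      case 2
      then have "t \<le> bound r" using r up unfolding Rp_def by blast
      then show ?thesis using eq 2 unfolding satisfies_def bound_def by (simp add: field_simps)
    next
      case 3
      then have "bound r \<le> t" using r lo unfolding Rn_def by blast
      then show ?thesis using eq 3 unfolding satisfies_def bound_def by (simp add: field_simps)
    qed
  qed
  then show ?thesis by (intro that ballI)
qed

lemma farkas_infeasible:
  assumes "finite V" "finite R" "\<nexists>x. \<forall>r\<in>R. satisfies V x r"
  shows "\<exists>a c. c < 0 \<and> (\<forall>q\<in>V. a q = 0) \<and> conic_comb R (a, c)"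
  using assms
proof (induction V arbitrary: R rule: finite_induct)
  case empty
  then obtain r where "r \<in> R" "snd r < 0" unfolding satisfies_def by (auto simp: not_le)
  then show ?case by (metis conic_comb_base empty_iff prod.collapse)
next
  case (insert v V)
  have "\<nexists>x. \<forall>r\<in>fm_eliminate v R. satisfies V x r"
  proof
    assume "\<exists>x. \<forall>r\<in>fm_eliminate v R. satisfies V x r"
    then obtain x where "\<forall>r\<in>fm_eliminate v R. satisfies V x r" by blast
    then obtain t where "\<forall>r\<in>R. satisfies (insert v V) (x(v := t)) r"
      using fm_eliminate_solution_extends[OF insert.prems(1) insert.hyps(2,1)] by blast
    then show False using insert.prems(2) by blast
  qed
  then have "\<exists>a c. c < 0 \<and> (\<forall>q\<in>V. a q = 0) \<and> conic_comb (fm_eliminate v R) (a, c)"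
    by (rule insert.IH[OF finite_fm_eliminate[OF insert.prems(1)]])
  then obtain a c where "c < 0" "\<forall>q\<in>V. a q = 0" and ac: "conic_comb (fm_eliminate v R) (a, c)"
    by auto
  moreover have "a v = 0"
    using conic_comb_coeff[OF ac] fm_eliminate_coeff by fastforce
  moreover have "conic_comb R (a, c)"
    using ac by (rule conic_comb_trans) (rule fm_eliminate_conic_comb)
  ultimately show ?case by auto
qed

section \<open>Duality for covering LPs\<close>

lemma satisfies_case_sum:
  assumes "finite J" "finite V"
  shows "satisfies (Inl ` J \<union> Inr ` V) x (case_sum f g, c)
    \<longleftrightarrow> (\<Sum>j\<in>J. f j * x (Inl j)) + (\<Sum>v\<in>V. g v * x (Inr v)) \<le> c"
proof -
  have "(\<Sum>q\<in>Inl ` J \<union> Inr ` V. case_sum f g q * x q)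
      = (\<Sum>q\<in>Inl ` J. case_sum f g q * x q) + (\<Sum>q\<in>Inr ` V. case_sum f g q * x q)"
    using assms by (intro sum.union_disjoint) auto
  then show ?thesis unfolding satisfies_def by (simp add: sum.reindex)
qed

text \<open>The dual of the covering LP
  \<open>min {w\<cdot>z + L u | z(A j) + u \<ge> K j (j \<in> J), 0 \<le> z \<le> b, u \<ge> 0}\<close>, as a system of inequalities
  in the variables \<open>Inl j\<close> (the multiplier \<open>\<pi> j\<close>) and \<open>Inr v\<close> (the multiplier \<open>\<mu> v\<close>).\<close>
definition covering_dual_system :: "'j set \<Rightarrow> 'v set \<Rightarrow> ('j \<Rightarrow> 'v set) \<Rightarrow> ('j \<Rightarrow> real)
    \<Rightarrow> ('v \<Rightarrow> real) \<Rightarrow> ('v \<Rightarrow> real) \<Rightarrow> real \<Rightarrow> (('j + 'v \<Rightarrow> real) \<times> real) set" where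
  "covering_dual_system J V A K w b L =
     (\<lambda>j. (case_sum (\<lambda>j'. if j' = j then -1 else 0) (\<lambda>_. 0), 0)) ` J
   \<union> (\<lambda>v. (case_sum (\<lambda>_. 0) (\<lambda>v'. if v' = v then -1 else 0), 0)) ` V
   \<union> (\<lambda>v. (case_sum (\<lambda>j. if v \<in> A j then 1 else 0) (\<lambda>v'. if v' = v then -1 else 0), w v)) ` V
   \<union> {(case_sum (\<lambda>j. - K j) b, - L), (case_sum (\<lambda>_. 1) (\<lambda>_. 0), L)}"

definition covering_dual :: "'j set \<Rightarrow> 'v set \<Rightarrow> ('j \<Rightarrow> 'v set) \<Rightarrow> ('j \<Rightarrow> real)
    \<Rightarrow> ('v \<Rightarrow> real) \<Rightarrow> ('v \<Rightarrow> real) \<Rightarrow> real \<Rightarrow> ('j \<Rightarrow> real) \<Rightarrow> ('v \<Rightarrow> real) \<Rightarrow> bool" where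
  "covering_dual J V A K w b L \<pi> \<mu> \<longleftrightarrow>
     (\<forall>j\<in>J. 0 \<le> \<pi> j) \<and> (\<forall>v\<in>V. 0 \<le> \<mu> v)
   \<and> (\<forall>v\<in>V. (\<Sum>j\<in>{j\<in>J. v \<in> A j}. \<pi> j) - \<mu> v \<le> w v)
   \<and> L \<le> (\<Sum>j\<in>J. K j * \<pi> j) - (\<Sum>v\<in>V. b v * \<mu> v)
   \<and> (\<Sum>j\<in>J. \<pi> j) \<le> L"

lemma covering_dual_if_satisfies:
  assumes fin: "finite J" "finite V"
    and x: "\<forall>r\<in>covering_dual_system J V A K w b L. satisfies (Inl ` J \<union> Inr ` V) x r"
  shows "covering_dual J V A K w b L (\<lambda>j. x (Inl j)) (\<lambda>v. x (Inr v))"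
proof -
  have sat: "(\<Sum>j\<in>J. f j * x (Inl j)) + (\<Sum>v\<in>V. g v * x (Inr v)) \<le> c"
    if "(case_sum f g, c) \<in> covering_dual_system J V A K w b L" for f g c
    using x that satisfies_case_sum[OF fin] by blast
  note delta = if_distrib[of "\<lambda>a. a * _"] sum.inter_filter[OF fin(1)]
  show ?thesis unfolding covering_dual_def
  proof (intro conjI ballI)
    fix j assume "j \<in> J"
    then show "0 \<le> x (Inl j)"
      using sat[of "\<lambda>j'. if j' = j then -1 else 0" "\<lambda>_. 0" 0] fin
      by (simp add: covering_dual_system_def delta cong: if_cong)
  next
    fix v assume "v \<in> V"
    then show "0 \<le> x (Inr v)"
      using sat[of "\<lambda>_. 0" "\<lambda>v'. if v' = v then -1 else 0" 0] fin
      by (simp add: covering_dual_system_def delta cong: if_cong)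
  next
    fix v assume "v \<in> V"
    then show "(\<Sum>j\<in>{j \<in> J. v \<in> A j}. x (Inl j)) - x (Inr v) \<le> w v"
      using sat[of "\<lambda>j. if v \<in> A j then 1 else 0" "\<lambda>v'. if v' = v then -1 else 0" "w v"] fin
      by (simp add: covering_dual_system_def delta cong: if_cong)
  next
    show "L \<le> (\<Sum>j\<in>J. K j * x (Inl j)) - (\<Sum>v\<in>V. b v * x (Inr v))"
      using sat[of "\<lambda>j. - K j" b "- L"] by (simp add: covering_dual_system_def sum_negf)
  next
    show "(\<Sum>j\<in>J. x (Inl j)) \<le> L"
      using sat[of "\<lambda>_. 1" "\<lambda>_. 0" L] by (simp add: covering_dual_system_def)
  qed
qed

text \<open>\<open>(a, c)\<close> is implied by the dual constraints combined with the multipliers \<open>z, t, u\<close>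
  of a (homogenised) primal point \<open>(z/t, u/t)\<close>; this is the weak-duality half of the argument.\<close>
definition primal_dominated :: "'j set \<Rightarrow> 'v set \<Rightarrow> ('j \<Rightarrow> 'v set) \<Rightarrow> ('j \<Rightarrow> real)
    \<Rightarrow> ('v \<Rightarrow> real) \<Rightarrow> ('v \<Rightarrow> real) \<Rightarrow> real \<Rightarrow> ('j + 'v \<Rightarrow> real) \<times> real \<Rightarrow> bool" where
  "primal_dominated J V A K w b L r \<longleftrightarrow> (\<exists>z t u. (\<forall>v. 0 \<le> z v) \<and> 0 \<le> t \<and> 0 \<le> u
     \<and> (\<forall>j\<in>J. fst r (Inl j) \<le> sum z (A j) - t * K j + u)
     \<and> (\<forall>v\<in>V. fst r (Inr v) \<le> t * b v - z v)
     \<and> (\<Sum>v\<in>V. z v * w v) - t * L + u * L \<le> snd r)"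

lemma primal_dominated_add:
  assumes "primal_dominated J V A K w b L (a, c)" "primal_dominated J V A K w b L (a', c')"
  shows "primal_dominated J V A K w b L (\<lambda>q. a q + a' q, c + c')"
proof -
  obtain z t u where z: "\<forall>v. 0 \<le> z v" "0 \<le> t" "0 \<le> u"
    "\<forall>j\<in>J. a (Inl j) \<le> sum z (A j) - t * K j + u" "\<forall>v\<in>V. a (Inr v) \<le> t * b v - z v"
    "(\<Sum>v\<in>V. z v * w v) - t * L + u * L \<le> c"
    using assms(1) unfolding primal_dominated_def by auto
  obtain z' t' u' where z': "\<forall>v. 0 \<le> z' v" "0 \<le> t'" "0 \<le> u'"
    "\<forall>j\<in>J. a' (Inl j) \<le> sum z' (A j) - t' * K j + u'" "\<forall>v\<in>V. a' (Inr v) \<le> t' * b v - z' v"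
    "(\<Sum>v\<in>V. z' v * w v) - t' * L + u' * L \<le> c'"
    using assms(2) unfolding primal_dominated_def by auto
  have "a (Inl j) + a' (Inl j) \<le> sum (\<lambda>v. z v + z' v) (A j) - (t + t') * K j + (u + u')"
    if "j \<in> J" for j
    using add_mono[OF z(4)[rule_format, OF that] z'(4)[rule_format, OF that]]
    by (simp add: sum.distrib algebra_simps)
  moreover have "a (Inr v) + a' (Inr v) \<le> (t + t') * b v - (z v + z' v)" if "v \<in> V" for v
    using add_mono[OF z(5)[rule_format, OF that] z'(5)[rule_format, OF that]]
    by (simp add: algebra_simps)
  moreover have "(\<Sum>v\<in>V. (z v + z' v) * w v) - (t + t') * L + (u + u') * L \<le> c + c'"
    using add_mono[OF z(6) z'(6)] by (simp add: sum.distrib algebra_simps)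
  ultimately show ?thesis using z z' unfolding primal_dominated_def
    by (intro exI[of _ "\<lambda>v. z v + z' v"] exI[of _ "t + t'"] exI[of _ "u + u'"]) auto
qed

lemma primal_dominated_scale:
  assumes "primal_dominated J V A K w b L (a, c)" and s: "0 \<le> s"
  shows "primal_dominated J V A K w b L (\<lambda>q. s * a q, s * c)"
proof -
  obtain z t u where z: "\<forall>v. 0 \<le> z v" "0 \<le> t" "0 \<le> u"
    "\<forall>j\<in>J. a (Inl j) \<le> sum z (A j) - t * K j + u" "\<forall>v\<in>V. a (Inr v) \<le> t * b v - z v"
    "(\<Sum>v\<in>V. z v * w v) - t * L + u * L \<le> c"
    using assms(1) unfolding primal_dominated_def by auto
  have "s * a (Inl j) \<le> sum (\<lambda>v. s * z v) (A j) - (s * t) * K j + s * u" if "j \<in> J" for j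
    using mult_left_mono[OF z(4)[rule_format, OF that] s]
    by (simp add: sum_distrib_left algebra_simps)
  moreover have "s * a (Inr v) \<le> (s * t) * b v - s * z v" if "v \<in> V" for v
    using mult_left_mono[OF z(5)[rule_format, OF that] s] by (simp add: algebra_simps)
  moreover have "(\<Sum>v\<in>V. s * z v * w v) - (s * t) * L + (s * u) * L \<le> s * c"
    using mult_left_mono[OF z(6) s] by (simp add: sum_distrib_left algebra_simps)
  ultimately show ?thesis using z s unfolding primal_dominated_def
    by (intro exI[of _ "\<lambda>v. s * z v"] exI[of _ "s * t"] exI[of _ "s * u"]) auto
qed

lemma covering_dual_system_primal_dominated:
  assumes fin: "finite V" and A: "\<forall>j\<in>J. A j \<subseteq> V"
    and r: "r \<in> covering_dual_system J V A K w b L"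
  shows "primal_dominated J V A K w b L r"
proof -
  from r consider j where "r = (case_sum (\<lambda>j'. if j' = j then -1 else 0) (\<lambda>_. 0), 0)"
    | v where "r = (case_sum (\<lambda>_. 0) (\<lambda>v'. if v' = v then -1 else 0), 0)"
    | v where "v \<in> V"
        "r = (case_sum (\<lambda>j. if v \<in> A j then 1 else 0) (\<lambda>v'. if v' = v then -1 else 0), w v)"
    | "r = (case_sum (\<lambda>j. - K j) b, - L)"
    | "r = (case_sum (\<lambda>_. 1) (\<lambda>_. 0), L)"
    unfolding covering_dual_system_def by blast
  then show ?thesis
  proof cases
    case (3 v)
    have "finite (A j)" if "j \<in> J" for j by (rule finite_subset[OF _ fin]) (use A that in blast)
    then have "(if v \<in> A j then 1 else 0) \<le> sum (\<lambda>v'. if v' = v then 1 else 0 :: real) (A j)"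
      if "j \<in> J" for j
      using that by simp
    moreover have "(\<Sum>v'\<in>V. (if v' = v then 1 else 0) * w v') = w v"
      using 3(1) fin by (simp add: if_distrib[of "\<lambda>a. a * _"] cong: if_cong)
    ultimately show ?thesis using 3(2) unfolding primal_dominated_def
      by (intro exI[of _ "\<lambda>v'. if v' = v then 1 else 0"] exI[of _ 0]) auto
  next
    case 4
    then show ?thesis unfolding primal_dominated_def
      by (intro exI[of _ "\<lambda>_. 0"] exI[of _ 1] exI[of _ 0]) auto
  next
    case 5
    then show ?thesis unfolding primal_dominated_def
      by (intro exI[of _ "\<lambda>_. 0"] exI[of _ 0] exI[of _ 1]) auto
  qed (auto simp: primal_dominated_def intro!: exI[of _ "\<lambda>_. 0"] exI[of _ 0])
qed

lemma conic_comb_primal_dominated: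
  assumes "finite V" "\<forall>j\<in>J. A j \<subseteq> V" "conic_comb (covering_dual_system J V A K w b L) r"
  shows "primal_dominated J V A K w b L r"
  using assms(3)
  by (induction rule: conic_comb.induct)
    (auto intro: covering_dual_system_primal_dominated[OF assms(1,2)]
      primal_dominated_add primal_dominated_scale)

text \<open>A primal point with \<open>u \<ge> 1\<close> costs at least \<open>L\<close> anyway, so the lower bound on the
  covering LP is only needed for \<open>u < 1\<close>; \<open>t = 0\<close> is the recession direction.\<close>
lemma covering_homogeneous_bound:
  fixes K :: "'j \<Rightarrow> real" and w b z :: "'v \<Rightarrow> real" and L t u :: real
  assumes w: "\<forall>v\<in>V. 0 \<le> w v" and L: "0 \<le> L"
    and primal: "\<And>u z. 0 \<le> u \<Longrightarrow> u < 1 \<Longrightarrow> \<forall>v\<in>V. 0 \<le> z v \<and> z v \<le> b v \<Longrightarrow>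
      \<forall>j\<in>J. K j - u \<le> sum z (A j) \<Longrightarrow> (1 - u) * L \<le> (\<Sum>v\<in>V. w v * z v)"
    and z: "\<forall>v. 0 \<le> z v" "0 \<le> t" "0 \<le> u"
      "\<forall>j\<in>J. t * K j - u \<le> sum z (A j)" "\<forall>v\<in>V. z v \<le> t * b v"
  shows "t * L \<le> (\<Sum>v\<in>V. z v * w v) + u * L"
proof (rule ccontr)
  assume less: "\<not> ?thesis"
  show False
  proof (cases "t = 0")
    case True
    then have "\<forall>v\<in>V. z v = 0" using z(1,5) by (auto intro: order_antisym)
    then have "u * L < 0" using less True by simp
    then show False using z(3) L by (simp add: mult_less_0_iff)
  next
    case False
    then have t: "t > 0" using z(2) by simp
    have "(1 - u / t) * L \<le> (\<Sum>v\<in>V. w v * (z v / t))"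
    proof (rule primal)
      show "u / t < 1"
      proof (rule ccontr)
        assume "\<not> u / t < 1"
        then have "t \<le> u" using t by (simp add: field_simps)
        then have "t * L \<le> u * L" using L by (rule mult_right_mono)
        moreover have "0 \<le> (\<Sum>v\<in>V. z v * w v)" using z(1) w by (simp add: sum_nonneg)
        ultimately show False using less by linarith
      qed
      show "\<forall>v\<in>V. 0 \<le> z v / t \<and> z v / t \<le> b v" using z(1,5) t by (simp add: field_simps)
      show "\<forall>j\<in>J. K j - u / t \<le> sum (\<lambda>v. z v / t) (A j)"
      proof
        fix j assume "j \<in> J"
        then have "(t * K j - u) / t \<le> sum z (A j) / t"
          using z(4) t by (simp add: divide_right_mono)
        then show "K j - u / t \<le> sum (\<lambda>v. z v / t) (A j)"
          using t by (simp add: sum_divide_distrib diff_divide_distrib)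
      qed
    qed (use z(3) t in simp)
    also have "\<dots> = (\<Sum>v\<in>V. z v * w v) / t"
      by (simp add: sum_divide_distrib mult.commute)
    finally have "(1 - u / t) * L * t \<le> (\<Sum>v\<in>V. z v * w v)"
      using t by (simp add: pos_le_divide_eq)
    moreover have "(1 - u / t) * L * t = t * L - u * L" using t by (simp add: algebra_simps)
    ultimately show False using less by linarith
  qed
qed

text \<open>The variable \<open>u\<close> of the covering LP, with cost \<open>L\<close>, is what produces the dual constraint
  \<open>\<Sum> \<pi> \<le> L\<close>.\<close>
theorem covering_lp_duality:
  assumes finJ: "finite J" and finV: "finite V" and A: "\<forall>j\<in>J. A j \<subseteq> V"
    and w: "\<forall>v\<in>V. 0 \<le> w v" and L: "0 \<le> L"
    and primal: "\<And>u z. 0 \<le> u \<Longrightarrow> u < 1 \<Longrightarrow> \<forall>v\<in>V. 0 \<le> z v \<and> z v \<le> b v \<Longrightarrow>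
      \<forall>j\<in>J. K j - u \<le> sum z (A j) \<Longrightarrow> (1 - u) * L \<le> (\<Sum>v\<in>V. w v * z v)"
  shows "\<exists>\<pi> \<mu>. covering_dual J V A K w b L \<pi> \<mu>"
proof -
  let ?R = "covering_dual_system J V A K w b L"
  have "finite ?R" unfolding covering_dual_system_def using finJ finV by simp
  moreover have "\<exists>x. \<forall>r\<in>?R. satisfies (Inl ` J \<union> Inr ` V) x r"
  proof (rule ccontr)
    assume "\<nexists>x. \<forall>r\<in>?R. satisfies (Inl ` J \<union> Inr ` V) x r"
    with finJ finV \<open>finite ?R\<close>
    have "\<exists>a c. c < 0 \<and> (\<forall>q\<in>Inl ` J \<union> Inr ` V. a q = 0) \<and> conic_comb ?R (a, c)"
      by (intro farkas_infeasible) auto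
    then obtain a c where c: "c < 0" and a: "\<forall>q\<in>Inl ` J \<union> Inr ` V. a q = 0"
      and ac: "conic_comb ?R (a, c)"
      by auto
    obtain z t u where z: "\<forall>v. 0 \<le> z v" "0 \<le> t" "0 \<le> u"
      and zJ: "\<forall>j\<in>J. a (Inl j) \<le> sum z (A j) - t * K j + u"
      and zV: "\<forall>v\<in>V. a (Inr v) \<le> t * b v - z v"
      and zc: "(\<Sum>v\<in>V. z v * w v) - t * L + u * L \<le> c"
      using conic_comb_primal_dominated[OF finV A ac] unfolding primal_dominated_def by auto
    have "t * L \<le> (\<Sum>v\<in>V. z v * w v) + u * L"
      using zJ zV a by (intro covering_homogeneous_bound[OF w L primal z]) auto
    then show False using zc c by linarith
  qed
  ultimately show ?thesis using covering_dual_if_satisfies finJ finV by blast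
qed

section \<open>Sub-partial-routes and the factor \<open>W\<^sub>O\<^sub>F\<close>\<close>

lemma finite_edges: "finite Vp \<Longrightarrow> finite (edges Vp)"
  by (rule finite_subset[of _ "Pow (insert 0 Vp)"]) (auto simp: edges_def)

lemma edge_doubleton: "e \<in> edges Vp \<Longrightarrow> \<exists>u v. e = {u, v} \<and> u \<noteq> v"
  unfolding edges_def by auto

lemma EE_subset_edges: "EE Vp S \<subseteq> edges Vp"
  unfolding EE_def by auto

lemma EST_subset_edges: "EST Vp S T \<subseteq> edges Vp"
  unfolding EST_def by auto

lemma EST_mono: "A \<subseteq> A' \<Longrightarrow> EST Vp A B \<subseteq> EST Vp A' B"
  unfolding EST_def by blast

lemma EE_singleton [simp]: "EE Vp {u} = {}"
  unfolding EE_def by (auto dest!: edge_doubleton)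

lemma Xsub_degree: "x \<in> Xsub Vp \<Longrightarrow> v \<in> Vp \<Longrightarrow> sum x (delta Vp {v}) = 2"
  unfolding Xsub_def by auto

lemma Xsub_subtour: "x \<in> Xsub Vp \<Longrightarrow> S \<in> nesubs Vp \<Longrightarrow> sum x (EE Vp S) \<le> real (card S) - 1"
  unfolding Xsub_def by auto

lemma Xsub_sum_mono:
  assumes "finite Vp" "x \<in> Xsub Vp" "F \<subseteq> G" "G \<subseteq> edges Vp"
  shows "sum x F \<le> sum x G"
  using assms by (intro sum_mono2) (auto simp: Xsub_def dest: finite_edges intro: finite_subset)

lemma Xsub_EE_union_ge:
  assumes fin: "finite Vp" and x: "x \<in> Xsub Vp" and AB: "A \<inter> B = {}"
  shows "sum x (EE Vp A) + sum x (EST Vp A B) + sum x (EE Vp B) \<le> sum x (EE Vp (A \<union> B))"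
proof -
  have "finite (EE Vp A)" "finite (EST Vp A B)" "finite (EE Vp B)"
    by (rule finite_subset[OF _ finite_edges[OF fin]], rule EE_subset_edges EST_subset_edges)+
  moreover have "EE Vp A \<inter> EST Vp A B = {}" "(EE Vp A \<union> EST Vp A B) \<inter> EE Vp B = {}"
    using AB unfolding EE_def EST_def by (auto dest!: edge_doubleton)
  ultimately have "sum x (EE Vp A) + sum x (EST Vp A B) + sum x (EE Vp B)
      = sum x (EE Vp A \<union> EST Vp A B \<union> EE Vp B)"
    by (simp add: sum.union_disjoint)
  also have "\<dots> \<le> sum x (EE Vp (A \<union> B))"
    using fin x by (rule Xsub_sum_mono) (auto simp: EE_def EST_def)
  finally show ?thesis .
qed

text \<open>The two edge sets meet \<open>u\<close> in different edges, so together they lie in \<open>\<delta>(u)\<close>.\<close>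
lemma Xsub_EST_through_singleton:
  assumes fin: "finite Vp" and x: "x \<in> Xsub Vp" and u: "u \<in> Vp" "u \<notin> T" "u \<notin> T'"
    and TT': "T \<inter> T' = {}"
  shows "sum x (EST Vp T {u}) + sum x (EST Vp {u} T') \<le> 2"
proof -
  have "finite (EST Vp T {u})" "finite (EST Vp {u} T')"
    by (rule finite_subset[OF EST_subset_edges finite_edges[OF fin]])+
  moreover have "EST Vp T {u} \<inter> EST Vp {u} T' = {}"
  proof (rule ccontr)
    assume "EST Vp T {u} \<inter> EST Vp {u} T' \<noteq> {}"
    then obtain a a' where "a \<in> T" "a' \<in> T'" "{a, u} = {u, a'}" unfolding EST_def by auto
    then show False using u TT' by (metis doubleton_eq_iff disjoint_iff)
  qed
  ultimately have "sum x (EST Vp T {u}) + sum x (EST Vp {u} T')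
      = sum x (EST Vp T {u} \<union> EST Vp {u} T')"
    by (simp add: sum.union_disjoint)
  also have "\<dots> \<le> sum x (delta Vp {u})"
  proof (rule Xsub_sum_mono[OF fin x])
    show "EST Vp T {u} \<union> EST Vp {u} T' \<subseteq> delta Vp {u}"
    proof
      fix e assume "e \<in> EST Vp T {u} \<union> EST Vp {u} T'"
      then obtain a where "e = {a, u}" "a \<noteq> u" "e \<in> edges Vp"
        unfolding EST_def using u by (auto simp: insert_commute)
      then show "e \<in> delta Vp {u}" unfolding delta_def by auto
    qed
  qed (auto simp: delta_def)
  also have "\<dots> = 2" using Xsub_degree[OF x u(1)] .
  finally show ?thesis .
qed

lemma partial_route_disjoint:
  "partial_route Vp H \<Longrightarrow> a < length H \<Longrightarrow> c < length H \<Longrightarrow> a \<noteq> c \<Longrightarrow> H ! a \<inter> H ! c = {}"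
  unfolding partial_route_def by blast

lemma partial_route_subset: "partial_route Vp H \<Longrightarrow> a < length H \<Longrightarrow> H ! a \<subseteq> Vp"
  unfolding partial_route_def by blast

lemma partial_route_singleton_adjacent:
  "partial_route Vp H \<Longrightarrow> Suc a < length H \<Longrightarrow> card (H ! a) = 1 \<or> card (H ! Suc a) = 1"
  unfolding partial_route_def by blast

lemma VH_subset: "partial_route Vp H \<Longrightarrow> VH H \<subseteq> Vp"
proof
  fix v assume H: "partial_route Vp H" and "v \<in> VH H"
  then obtain a where "a < length H" "v \<in> H ! a" unfolding VH_def by (auto simp: in_set_conv_nth)
  then show "v \<in> Vp" using partial_route_subset[OF H] by blast
qed

text \<open>\<open>seg H i j\<close> is \<open>V\<^sub>+(H')\<close> and \<open>xseg Vp x H i j\<close> is \<open>x(H')\<close> for the sub-partial-route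
  \<open>H' = (S\<^sub>i, \<dots>, S\<^sub>j)\<close>, with 0-based indices.\<close>
definition seg :: "nat set list \<Rightarrow> nat \<Rightarrow> nat \<Rightarrow> nat set" where
  "seg H i j = (\<Union>a\<in>{i..j}. H ! a)"

definition xseg :: "nat set \<Rightarrow> (nat set \<Rightarrow> real) \<Rightarrow> nat set list \<Rightarrow> nat \<Rightarrow> nat \<Rightarrow> real" where
  "xseg Vp x H i j = (\<Sum>a\<in>{i..j}. sum x (EE Vp (H ! a)))
     + (\<Sum>a\<in>{i..<j}. sum x (EST Vp (H ! a) (H ! Suc a)))"

lemma subroute_eq_map: "j < length H \<Longrightarrow> subroute H i j = map ((!) H) [i..<Suc j]"
  unfolding subroute_def by (rule nth_equalityI) (auto simp del: upt_Suc)

lemma VH_subroute: "j < length H \<Longrightarrow> VH (subroute H i j) = seg H i j"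
  unfolding VH_def seg_def
  by (simp add: subroute_eq_map atLeastLessThanSuc_atLeastAtMost del: upt_Suc)

lemma VH_eq_seg: "H \<noteq> [] \<Longrightarrow> VH H = seg H 0 (length H - 1)"
proof -
  assume "H \<noteq> []"
  then have "{0..length H - 1} = {..<length H}" by (cases H) auto
  moreover have "set H = (!) H ` {..<length H}" by (auto simp: set_conv_nth)
  ultimately show ?thesis unfolding VH_def seg_def by simp
qed

lemma xH_eq_xseg: "H \<noteq> [] \<Longrightarrow> xH Vp x H = xseg Vp x H 0 (length H - 1)"
  unfolding xH_def xseg_def
  by (cases H) (auto simp: lessThan_Suc_atMost atLeast0AtMost atLeast0LessThan)

lemma seg_refl [simp]: "seg H i i = H ! i"
  unfolding seg_def by simp

lemma seg_subset_VH: "j < length H \<Longrightarrow> seg H i j \<subseteq> VH H"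
  unfolding seg_def VH_def by (fastforce intro: nth_mem)

lemma seg_subset: "partial_route Vp H \<Longrightarrow> j < length H \<Longrightarrow> seg H i j \<subseteq> Vp"
  using seg_subset_VH VH_subset by blast

lemma seg_in_nesubs:
  assumes "partial_route Vp H" "i \<le> j" "j < length H"
  shows "seg H i j \<in> nesubs Vp"
proof -
  have "H ! i \<noteq> {}" using assms unfolding partial_route_def by auto
  then have "seg H i j \<noteq> {}" using assms(2) unfolding seg_def by auto
  then show ?thesis using seg_subset[OF assms(1,3)] unfolding nesubs_def by auto
qed

lemma seg_split: "i \<le> m \<Longrightarrow> m < j \<Longrightarrow> seg H i j = seg H i m \<union> seg H (Suc m) j"
proof -
  assume "i \<le> m" "m < j"
  then have "{i..j} = {i..m} \<union> {Suc m..j}" by auto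
  then show ?thesis unfolding seg_def by auto
qed

lemma seg_disjoint:
  assumes "partial_route Vp H" "j < length H" "c < length H" "c \<notin> {i..j}"
  shows "seg H i j \<inter> H ! c = {}"
proof -
  have "H ! a \<inter> H ! c = {}" if "a \<in> {i..j}" for a
    using partial_route_disjoint[OF assms(1), of a c] assms that by auto
  then show ?thesis unfolding seg_def by blast
qed

lemma card_seg:
  assumes "finite Vp" "partial_route Vp H" "j < length H"
  shows "card (seg H i j) = (\<Sum>a\<in>{i..j}. card (H ! a))"
  unfolding seg_def
proof (rule card_UN_disjoint)
  show "\<forall>a\<in>{i..j}. finite (H ! a)"
    using assms(3) partial_route_subset[OF assms(2)] finite_subset[OF _ assms(1)] by simp
  show "\<forall>a\<in>{i..j}. \<forall>c\<in>{i..j}. a \<noteq> c \<longrightarrow> H ! a \<inter> H ! c = {}"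
    using assms(3) partial_route_disjoint[OF assms(2)] by simp
qed simp

lemma card_seg_split:
  assumes "finite Vp" "partial_route Vp H" "i \<le> m" "m < j" "j < length H"
  shows "card (seg H i j) = card (seg H i m) + card (seg H (Suc m) j)"
proof -
  have "{i..j} = {i..m} \<union> {Suc m..j}" using assms by auto
  then have "(\<Sum>a\<in>{i..j}. card (H ! a)) = (\<Sum>a\<in>{i..m}. card (H ! a)) + (\<Sum>a\<in>{Suc m..j}. card (H ! a))"
    by (simp add: sum.union_disjoint)
  then show ?thesis using assms by (simp add: card_seg)
qed

lemma xseg_refl [simp]: "xseg Vp x H i i = sum x (EE Vp (H ! i))"
  unfolding xseg_def by simp

lemma xseg_Suc:
  "i \<le> j \<Longrightarrow> xseg Vp x H i (Suc j)
     = xseg Vp x H i j + sum x (EST Vp (H ! j) (H ! Suc j)) + sum x (EE Vp (H ! Suc j))"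
  unfolding xseg_def by (simp add: add.commute add.left_commute)

lemma xseg_split:
  assumes "i \<le> m" "m < j"
  shows "xseg Vp x H i j
    = xseg Vp x H i m + sum x (EST Vp (H ! m) (H ! Suc m)) + xseg Vp x H (Suc m) j"
proof -
  have "{i..j} = {i..m} \<union> {Suc m..j}" "{i..<j} = {i..<m} \<union> {m} \<union> {Suc m..<j}"
    using assms by auto
  then show ?thesis unfolding xseg_def by (simp add: sum.union_disjoint)
qed

lemma xseg_le_EE_seg:
  assumes fin: "finite Vp" and x: "x \<in> Xsub Vp" and H: "partial_route Vp H"
    and ij: "i \<le> j" "j < length H"
  shows "xseg Vp x H i j \<le> sum x (EE Vp (seg H i j))"
  using ij
proof (induction j rule: dec_induct)
  case (step j)
  have "H ! j \<subseteq> seg H i j" using step(1) unfolding seg_def by auto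
  then have "sum x (EST Vp (H ! j) (H ! Suc j)) \<le> sum x (EST Vp (seg H i j) (H ! Suc j))"
    by (intro Xsub_sum_mono[OF fin x] EST_mono EST_subset_edges)
  moreover have "sum x (EE Vp (seg H i j)) + sum x (EST Vp (seg H i j) (H ! Suc j))
      + sum x (EE Vp (H ! Suc j)) \<le> sum x (EE Vp (seg H i j \<union> H ! Suc j))"
    using step by (intro Xsub_EE_union_ge[OF fin x] seg_disjoint[OF H]) auto
  moreover have "seg H i j \<union> H ! Suc j = seg H i (Suc j)"
    using step(1) seg_split[of i j "Suc j" H] by simp
  ultimately show ?case using step by (simp add: xseg_Suc)
qed simp

lemma xseg_le_card_seg:
  assumes "finite Vp" "x \<in> Xsub Vp" "partial_route Vp H" "i \<le> j" "j < length H"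
  shows "xseg Vp x H i j \<le> real (card (seg H i j)) - 1"
  using xseg_le_EE_seg[OF assms] Xsub_subtour[OF assms(2) seg_in_nesubs[OF assms(3-5)]] by simp

definition part_slack :: "nat set \<Rightarrow> (nat set \<Rightarrow> real) \<Rightarrow> nat set list \<Rightarrow> nat \<Rightarrow> real" where
  "part_slack Vp x H a = real (card (H ! a)) - 1 - sum x (EE Vp (H ! a))"

text \<open>The correction terms of \<open>W\<^sub>O\<^sub>F\<close> at the parts \<open>S\<^sub>2\<close> and \<open>S\<^sub>\<ell>\<^sub>-\<^sub>1\<close> (1-based, as in \<open>W_OF\<close>).\<close>
definition end_slack :: "nat set \<Rightarrow> (nat set \<Rightarrow> real) \<Rightarrow> nat set list \<Rightarrow> real" where
  "end_slack Vp x H = (\<Sum>i\<in>{2, length H - 1} \<inter> {1..length H}. part_slack Vp x H (i - 1))"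

definition route_slack :: "nat set \<Rightarrow> (nat set \<Rightarrow> real) \<Rightarrow> nat set list \<Rightarrow> real" where
  "route_slack Vp x H = real (card (VH H)) - 1 - xH Vp x H + end_slack Vp x H"

lemma W_OF_eq: "W_OF Vp x H = 1 - route_slack Vp x H"
proof -
  have "(\<Sum>i\<in>{2, length H - 1} \<inter> {1..length H}.
          sum x (EE Vp (H ! (i - 1))) - real (card (H ! (i - 1))) + 1) = - end_slack Vp x H"
    unfolding end_slack_def part_slack_def sum_negf[symmetric] by (rule sum.cong) auto
  then show ?thesis unfolding W_OF_def route_slack_def by simp
qed

lemma part_slack_nonneg:
  "x \<in> Xsub Vp \<Longrightarrow> partial_route Vp H \<Longrightarrow> a < length H \<Longrightarrow> 0 \<le> part_slack Vp x H a"
  using Xsub_subtour[OF _ seg_in_nesubs, of x Vp H a a] unfolding part_slack_def by simp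

lemma part_slack_singleton: "card (H ! a) = 1 \<Longrightarrow> part_slack Vp x H a = 0"
  unfolding part_slack_def by (auto simp: card_Suc_eq)

lemma end_slack_ge:
  assumes "x \<in> Xsub Vp" "partial_route Vp H" "A \<subseteq> {2, length H - 1} \<inter> {1..length H}"
  shows "(\<Sum>i\<in>A. part_slack Vp x H (i - 1)) \<le> end_slack Vp x H"
  unfolding end_slack_def using assms
  by (intro sum_mono2) (auto intro: part_slack_nonneg)

lemma route_slack_ge_end_slack:
  assumes "finite Vp" "x \<in> Xsub Vp" "partial_route Vp H"
  shows "end_slack Vp x H \<le> route_slack Vp x H"
proof -
  have "H \<noteq> []" using assms(3) unfolding partial_route_def by simp
  then show ?thesis
    using xseg_le_card_seg[OF assms, of 0 "length H - 1"]
    unfolding route_slack_def by (simp add: xH_eq_xseg VH_eq_seg)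
qed

lemma route_slack_nonneg: "finite Vp \<Longrightarrow> x \<in> Xsub Vp \<Longrightarrow> partial_route Vp H \<Longrightarrow> 0 \<le> route_slack Vp x H"
  using route_slack_ge_end_slack end_slack_ge[of x Vp H "{}"] by fastforce

text \<open>If the next part \<open>S\<close> is a singleton (or is \<open>S\<^sub>2\<close>, whose slack is a term of \<open>W\<^sub>O\<^sub>F\<close>), the
  subtour constraint on the prefix extended by \<open>S\<close> pays for the edges into \<open>S\<close>. Otherwise the
  last part of the prefix is a singleton \<open>{u}\<close>, and the degree of \<open>u\<close> bounds the edges on
  both of its sides.\<close>
lemma prefix_bound:
  assumes fin: "finite Vp" and x: "x \<in> Xsub Vp" and H: "partial_route Vp H"
    and i: "Suc i < length H"
  shows "xseg Vp x H 0 i + sum x (EST Vp (H ! i) (H ! Suc i))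
           \<le> real (card (seg H 0 i)) + (if i = 0 then part_slack Vp x H 1 else 0)"
proof (cases "card (H ! Suc i) = 1 \<or> i = 0")
  case True
  have "xseg Vp x H 0 (Suc i) \<le> real (card (seg H 0 (Suc i))) - 1"
    using xseg_le_card_seg[OF fin x H] i by simp
  moreover have "card (seg H 0 (Suc i)) = card (seg H 0 i) + card (H ! Suc i)"
    using card_seg_split[OF fin H, of 0 i "Suc i"] i by simp
  moreover have "part_slack Vp x H (Suc i) \<le> (if i = 0 then part_slack Vp x H 1 else 0)"
    using True part_slack_singleton by auto
  ultimately show ?thesis by (simp add: xseg_Suc part_slack_def)
next
  case False
  then obtain k where k: "i = Suc k" using not0_implies_Suc by blast
  obtain u where u: "H ! i = {u}"
    using False partial_route_singleton_adjacent[OF H i] by (auto simp: card_Suc_eq)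
  have disj: "H ! i \<inter> H ! k = {}" "H ! i \<inter> H ! Suc i = {}" "H ! k \<inter> H ! Suc i = {}"
    using partial_route_disjoint[OF H] i k by auto
  have "xseg Vp x H 0 i = xseg Vp x H 0 k + sum x (EST Vp (H ! k) {u})"
    using u k by (simp add: xseg_Suc)
  moreover have "xseg Vp x H 0 k \<le> real (card (seg H 0 k)) - 1"
    using xseg_le_card_seg[OF fin x H] i k by simp
  moreover have "card (seg H 0 i) = card (seg H 0 k) + 1"
    using card_seg_split[OF fin H, of 0 k i] i k u by simp
  moreover have "sum x (EST Vp (H ! k) {u}) + sum x (EST Vp {u} (H ! Suc i)) \<le> 2"
    using partial_route_subset[OF H, of i] i u disj
    by (intro Xsub_EST_through_singleton[OF fin x]) auto
  ultimately show ?thesis using u k by simp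
qed

lemma suffix_bound:
  assumes fin: "finite Vp" and x: "x \<in> Xsub Vp" and H: "partial_route Vp H"
    and j: "Suc j < length H"
  shows "sum x (EST Vp (H ! j) (H ! Suc j)) + xseg Vp x H (Suc j) (length H - 1)
           \<le> real (card (seg H (Suc j) (length H - 1)))
              + (if Suc (Suc j) = length H then part_slack Vp x H j else 0)"
proof (cases "card (H ! j) = 1 \<or> Suc (Suc j) = length H")
  case True
  have "xseg Vp x H j (length H - 1) \<le> real (card (seg H j (length H - 1))) - 1"
    using xseg_le_card_seg[OF fin x H] j by simp
  moreover have "xseg Vp x H j (length H - 1) = sum x (EE Vp (H ! j))
      + sum x (EST Vp (H ! j) (H ! Suc j)) + xseg Vp x H (Suc j) (length H - 1)"
    using xseg_split[of j j "length H - 1"] j by simp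
  moreover have "card (seg H j (length H - 1)) = card (H ! j) + card (seg H (Suc j) (length H - 1))"
    using card_seg_split[OF fin H, of j j "length H - 1"] j by simp
  moreover have "part_slack Vp x H j \<le> (if Suc (Suc j) = length H then part_slack Vp x H j else 0)"
    using True part_slack_singleton by auto
  ultimately show ?thesis by (simp add: part_slack_def)
next
  case False
  then have jj: "Suc (Suc j) < length H" using j by simp
  obtain u where u: "H ! Suc j = {u}"
    using False partial_route_singleton_adjacent[OF H j] by (auto simp: card_Suc_eq)
  have disj: "H ! Suc j \<inter> H ! j = {}" "H ! Suc j \<inter> H ! Suc (Suc j) = {}"
    "H ! j \<inter> H ! Suc (Suc j) = {}"
    using partial_route_disjoint[OF H] jj by auto
  have "xseg Vp x H (Suc j) (length H - 1)
      = sum x (EST Vp {u} (H ! Suc (Suc j))) + xseg Vp x H (Suc (Suc j)) (length H - 1)"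
    using xseg_split[of "Suc j" "Suc j" "length H - 1"] jj u by simp
  moreover have "xseg Vp x H (Suc (Suc j)) (length H - 1)
      \<le> real (card (seg H (Suc (Suc j)) (length H - 1))) - 1"
    using xseg_le_card_seg[OF fin x H] jj by simp
  moreover have "card (seg H (Suc j) (length H - 1))
      = 1 + card (seg H (Suc (Suc j)) (length H - 1))"
    using card_seg_split[OF fin H, of "Suc j" "Suc j" "length H - 1"] jj u by simp
  moreover have "sum x (EST Vp (H ! j) {u}) + sum x (EST Vp {u} (H ! Suc (Suc j))) \<le> 2"
    using partial_route_subset[OF H, of "Suc j"] j u disj
    by (intro Xsub_EST_through_singleton[OF fin x]) auto
  ultimately show ?thesis using u False by simp
qed

lemma end_slack_ge_ends:
  assumes x: "x \<in> Xsub Vp" and H: "partial_route Vp H" and ij: "i \<le> j" "j < length H"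
    and not_middle: "\<not> (i = 1 \<and> j = 1 \<and> length H = 3)"
  shows "(if i = 1 then part_slack Vp x H 1 else 0)
    + (if Suc (Suc j) = length H then part_slack Vp x H j else 0) \<le> end_slack Vp x H"
proof -
  have "2 \<le> length H" if "i = 1" using that ij by simp
  moreover have "length H - 1 \<noteq> 2" if "i = 1" "Suc (Suc j) = length H"
    using that ij not_middle by auto
  moreover have "length H - 2 = j" if "Suc (Suc j) = length H" using that by simp
  ultimately show ?thesis
    using end_slack_ge[OF x H, of "{2, length H - 1}"] end_slack_ge[OF x H, of "{2}"]
      end_slack_ge[OF x H, of "{length H - 1}"] end_slack_ge[OF x H, of "{}"]
    by (auto simp: Suc_diff_Suc numeral_2_eq_2)
qed

text \<open>The case \<open>H' = (S\<^sub>2)\<close> inside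
  \<open>H = (S\<^sub>1, S\<^sub>2, S\<^sub>3)\<close> is separate because there prefix and suffix would both claim
  the correction term of \<open>S\<^sub>2\<close>.\<close>
lemma seg_slack_le_route_slack:
  assumes fin: "finite Vp" and x: "x \<in> Xsub Vp" and H: "partial_route Vp H"
    and ij: "i \<le> j" "j < length H"
  shows "real (card (seg H i j)) - 1 - sum x (EE Vp (seg H i j)) \<le> route_slack Vp x H"
proof (cases "i = 1 \<and> j = 1 \<and> length H = 3")
  case True
  then have "real (card (seg H i j)) - 1 - sum x (EE Vp (seg H i j)) = part_slack Vp x H 1"
    by (simp add: part_slack_def)
  also have "\<dots> \<le> end_slack Vp x H" using end_slack_ge[OF x H, of "{2}"] True by simp
  also have "\<dots> \<le> route_slack Vp x H" by (rule route_slack_ge_end_slack[OF fin x H])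
  finally show ?thesis .
next
  case False
  define L where "L = length H - 1"
  have jL: "j \<le> L" and ne: "H \<noteq> []" using ij unfolding L_def by auto
  define P where "P = (case i of 0 \<Rightarrow> 0 | Suc k \<Rightarrow> xseg Vp x H 0 k + sum x (EST Vp (H ! k) (H ! i)))"
  define cP where "cP = (case i of 0 \<Rightarrow> 0 | Suc k \<Rightarrow> card (seg H 0 k))"
  define eP where "eP = (if i = 1 then part_slack Vp x H 1 else 0)"
  define Q where
    "Q = (if j = L then 0 else sum x (EST Vp (H ! j) (H ! Suc j)) + xseg Vp x H (Suc j) L)"
  define cQ where "cQ = (if j = L then 0 else card (seg H (Suc j) L))"
  define eQ where "eQ = (if Suc (Suc j) = length H then part_slack Vp x H j else 0)"
  have "xseg Vp x H i L = xseg Vp x H i j + Q"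
    using xseg_split[of i j L] ij jL unfolding Q_def by auto
  moreover have "xseg Vp x H 0 L = P + xseg Vp x H i L"
    using xseg_split[of 0 _ L] ij jL unfolding P_def by (cases i) auto
  ultimately have xH: "xH Vp x H = P + xseg Vp x H i j + Q"
    using xH_eq_xseg[OF ne] unfolding L_def by simp
  have "card (seg H i L) = card (seg H i j) + cQ"
    using card_seg_split[OF fin H, of i j L] ij jL unfolding cQ_def L_def by auto
  moreover have "card (seg H 0 L) = cP + card (seg H i L)"
    using card_seg_split[OF fin H, of 0 _ L] ij jL unfolding cP_def L_def by (cases i) auto
  ultimately have card: "card (VH H) = cP + card (seg H i j) + cQ"
    using VH_eq_seg[OF ne] unfolding L_def by simp
  have "P \<le> real cP + eP"
    using prefix_bound[OF fin x H] ij unfolding P_def cP_def eP_def by (cases i) auto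
  moreover have "Q \<le> real cQ + eQ"
    using suffix_bound[OF fin x H, of j] jL unfolding Q_def cQ_def eQ_def L_def by auto
  moreover have "eP + eQ \<le> end_slack Vp x H"
    using end_slack_ge_ends[OF x H ij False] unfolding eP_def eQ_def .
  moreover have "xseg Vp x H i j \<le> sum x (EE Vp (seg H i j))"
    by (rule xseg_le_EE_seg[OF fin x H ij])
  ultimately show ?thesis using xH card unfolding route_slack_def by simp
qed

section \<open>The scenario LPs defining \<open>L\<^sup>*\<close>\<close>

definition scenario_feasible :: "nat set \<Rightarrow> (nat \<Rightarrow> nat) \<Rightarrow> real \<Rightarrow> (nat \<Rightarrow> nat \<Rightarrow> real) \<Rightarrow> nat
    \<Rightarrow> nat set list \<Rightarrow> (nat \<Rightarrow> real) \<Rightarrow> bool" where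
  "scenario_feasible Vp b C d \<xi> H y \<longleftrightarrow>
     (\<forall>i j. i \<le> j \<and> j < length H \<longrightarrow> real_of_int (kk C d \<xi> (seg H i j)) - 1 \<le> sum y (seg H i j))
   \<and> (\<forall>v\<in>Vp. 0 \<le> y v \<and> y v \<le> real (b v))"

lemma Lstar_xi_eq_Inf:
  "Lstar_xi Vp w b C d \<xi> H = Inf {(\<Sum>v\<in>VH H. w v * y v) | y. scenario_feasible Vp b C d \<xi> H y}"
  unfolding Lstar_xi_def scenario_feasible_def by (simp add: VH_subroute cong: imp_cong)

lemma scenario_objective_nonneg:
  assumes "partial_route Vp H" "\<forall>v\<in>Vp. 0 \<le> w v" "scenario_feasible Vp b C d \<xi> H y"
  shows "0 \<le> (\<Sum>v\<in>VH H. w v * y v)"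
  using assms VH_subset[OF assms(1)] unfolding scenario_feasible_def
  by (auto intro!: sum_nonneg)

lemma Lstar_xi_le:
  assumes "partial_route Vp H" "\<forall>v\<in>Vp. 0 \<le> w v" "scenario_feasible Vp b C d \<xi> H y"
  shows "Lstar_xi Vp w b C d \<xi> H \<le> (\<Sum>v\<in>VH H. w v * y v)"
  unfolding Lstar_xi_eq_Inf
  by (rule cInf_lower) (use assms scenario_objective_nonneg in \<open>auto intro!: bdd_belowI\<close>)

lemma Lstar_xi_nonneg:
  assumes "partial_route Vp H" "\<forall>v\<in>Vp. 0 \<le> w v" "scenario_feasible Vp b C d \<xi> H y"
  shows "0 \<le> Lstar_xi Vp w b C d \<xi> H"
  unfolding Lstar_xi_eq_Inf
  by (rule cInf_greatest) (use assms scenario_objective_nonneg in auto)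

text \<open>Along a route through \<open>S\<close> the vehicle starts with at most \<open>C\<close> and unloads at most
  \<open>C y\<^sub>v\<close> at each customer, so \<open>d(S) \<le> C (1 + y(S))\<close>.\<close>
lemma kk_le_capacity:
  assumes C: "C > 0" and routes: "\<forall>R. is_route Vp R \<longrightarrow> (\<exists>y\<in>PiR C N d R. in_box Vp N b y)"
    and \<xi>: "\<xi> \<in> {1..N}" and S: "S \<noteq> {}" "S \<subseteq> Vp" "finite S"
  shows "real_of_int (kk C d \<xi> S) - 1 \<le> (\<Sum>v\<in>S. real (b v))"
proof -
  define R where "R = sorted_list_of_set S"
  define n where "n = length R"
  have R: "set R = S" "distinct R" using S unfolding R_def by auto
  have reindex: "(\<Sum>k<n. h (R ! k)) = (\<Sum>v\<in>S. h v)" for h :: "nat \<Rightarrow> real"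
    using sum.reindex_bij_betw[OF bij_betw_nth[OF R(2) refl refl]] R(1) unfolding n_def by simp
  have "is_route Vp R" unfolding is_route_def using R S by auto
  then obtain y where y: "y \<in> PiR C N d R" "in_box Vp N b y" using routes by blast
  then obtain f g :: "nat \<Rightarrow> real" where
    f: "\<forall>i\<le>n. 0 \<le> f i \<and> f i \<le> C" and
    g: "\<forall>i\<in>{1..n}. f (i - 1) + d \<xi> (R ! (i - 1)) = f i + g i \<and> 0 \<le> g i
          \<and> g i \<le> C * real (y \<xi> (R ! (i - 1)))"
    using \<xi> unfolding PiR_def route_flow_def n_def by blast
  have step: "f k + d \<xi> (R ! k) = f (Suc k) + g (Suc k)" "g (Suc k) \<le> C * real (y \<xi> (R ! k))"
    if "k < n" for k
    using g that by (auto dest!: bspec[of _ _ "Suc k"])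
  have "(\<Sum>k<n. f k + d \<xi> (R ! k)) = (\<Sum>k<n. f (Suc k) + g (Suc k))"
    using step(1) by (intro sum.cong) auto
  then have "(\<Sum>k<n. d \<xi> (R ! k)) = f n - f 0 + (\<Sum>k<n. g (Suc k))"
    using sum_lessThan_telescope[of f n] by (simp add: sum.distrib sum_subtractf)
  also have "(\<Sum>k<n. g (Suc k)) \<le> (\<Sum>k<n. C * real (b (R ! k)))"
  proof (rule sum_mono)
    fix k assume "k \<in> {..<n}"
    then have "R ! k \<in> Vp" using R S unfolding n_def by auto
    then have "real (y \<xi> (R ! k)) \<le> real (b (R ! k))" using y(2) \<xi> unfolding in_box_def by auto
    then show "g (Suc k) \<le> C * real (b (R ! k))"
      using step(2) \<open>k \<in> {..<n}\<close> C by (smt (verit) lessThan_iff mult_left_mono)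
  qed
  also have "(\<Sum>k<n. C * real (b (R ! k))) = C * (\<Sum>v\<in>S. real (b v))"
    using reindex[of "\<lambda>v. C * real (b v)"] by (simp add: sum_distrib_left)
  finally have "(\<Sum>v\<in>S. d \<xi> v) \<le> C * (1 + (\<Sum>v\<in>S. real (b v)))"
    using f[rule_format, of 0] f[rule_format, of n] reindex[of "d \<xi>"] by (simp add: algebra_simps)
  then have "(\<Sum>v\<in>S. d \<xi> v) / C \<le> 1 + (\<Sum>v\<in>S. real (b v))"
    using C by (simp add: field_simps)
  then have "kk C d \<xi> S \<le> 1 + int (\<Sum>v\<in>S. b v)"
    unfolding kk_def by (simp add: ceiling_le_iff)
  then have "real_of_int (kk C d \<xi> S) \<le> real_of_int (1 + int (\<Sum>v\<in>S. b v))"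
    by (simp only: of_int_le_iff)
  then show ?thesis by simp
qed

lemma scenario_feasible_b:
  assumes "finite Vp" "partial_route Vp H" "C > 0"
    and "\<forall>R. is_route Vp R \<longrightarrow> (\<exists>y\<in>PiR C N d R. in_box Vp N b y)" and "\<xi> \<in> {1..N}"
  shows "scenario_feasible Vp b C d \<xi> H (\<lambda>v. real (b v))"
  unfolding scenario_feasible_def
  using kk_le_capacity[OF assms(3-5)] seg_in_nesubs[OF assms(2)] finite_subset[OF _ assms(1)]
  by (auto simp: nesubs_def)

text \<open>Scaling a fractional cover up by \<open>1/(1 - \<sigma>)\<close> and capping it at the integer bounds
  still covers the integer demand \<open>K\<close>: either the capped coordinates alone reach \<open>K\<close>, or
  they miss it by at least 1, which absorbs the scaled deficit \<open>\<sigma>\<close>.\<close>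
lemma sum_min_scaled_ge:
  fixes z :: "'a \<Rightarrow> real" and b :: "'a \<Rightarrow> nat" and K :: int
  assumes fin: "finite S" and \<sigma>: "0 \<le> \<sigma>" "\<sigma> < 1"
    and z: "\<forall>v\<in>S. 0 \<le> z v \<and> z v \<le> real (b v)" and cover: "real_of_int K - \<sigma> \<le> sum z S"
  shows "real_of_int K \<le> (\<Sum>v\<in>S. min (real (b v)) (z v / (1 - \<sigma>)))"
proof -
  define W where "W = 1 - \<sigma>"
  have W: "W > 0" using \<sigma> unfolding W_def by simp
  define Cp where "Cp = {v\<in>S. real (b v) < z v / W}"
  define B where "B = (\<Sum>v\<in>Cp. b v)"
  have "Cp \<subseteq> S" unfolding Cp_def by auto
  then have split: "sum f S = sum f Cp + sum f (S - Cp)" for f :: "'a \<Rightarrow> real"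
    using fin by (simp add: sum.subset_diff)
  have "(\<Sum>v\<in>Cp. min (real (b v)) (z v / W)) = real B"
    unfolding B_def Cp_def by simp
  moreover have "(\<Sum>v\<in>S - Cp. min (real (b v)) (z v / W)) = sum z (S - Cp) / W"
    unfolding Cp_def sum_divide_distrib by (rule sum.cong) auto
  ultimately have "(\<Sum>v\<in>S. min (real (b v)) (z v / W)) = real B + sum z (S - Cp) / W"
    using split[of "\<lambda>v. min (real (b v)) (z v / W)"] by simp
  moreover have "real_of_int K \<le> real B + sum z (S - Cp) / W"
  proof (cases "real_of_int K \<le> real B")
    case True
    moreover have "0 \<le> sum z (S - Cp)" using z by (intro sum_nonneg) auto
    ultimately show ?thesis using W by (smt (verit) divide_nonneg_pos)
  next
    case False
    then have "int B < K" by (metis not_le of_int_le_iff of_int_of_nat_eq)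
    then have "real_of_int (int B) \<le> real_of_int (K - 1)" unfolding of_int_le_iff by linarith
    then have KB: "real B \<le> real_of_int K - 1" by simp
    have "sum z Cp \<le> real B" using z unfolding B_def Cp_def of_nat_sum by (intro sum_mono) auto
    then have "real_of_int K - \<sigma> - real B \<le> sum z (S - Cp)" using cover split[of z] by simp
    moreover have "\<sigma> * (real_of_int K - 1 - real B) \<ge> 0" using KB \<sigma> by simp
    ultimately have "real_of_int K * W \<le> real B * W + sum z (S - Cp)"
      unfolding W_def by (simp add: algebra_simps)
    then show ?thesis using W by (simp add: field_simps)
  qed
  ultimately show ?thesis unfolding W_def by simp
qed

lemma Lstar_xi_relaxed_le:
  assumes fin: "finite Vp" and H: "partial_route Vp H" and w: "\<forall>v\<in>Vp. 0 \<le> w v"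
    and \<sigma>: "0 \<le> \<sigma>" "\<sigma> < 1" and z: "\<forall>v\<in>Vp. 0 \<le> z v \<and> z v \<le> real (b v)"
    and cover: "\<forall>i j. i \<le> j \<and> j < length H \<longrightarrow>
      real_of_int (kk C d \<xi> (seg H i j)) - 1 - \<sigma> \<le> sum z (seg H i j)"
  shows "(1 - \<sigma>) * Lstar_xi Vp w b C d \<xi> H \<le> (\<Sum>v\<in>VH H. w v * z v)"
proof -
  define z' where "z' v = min (real (b v)) (z v / (1 - \<sigma>))" for v
  have "scenario_feasible Vp b C d \<xi> H z'"
    unfolding scenario_feasible_def
  proof (intro conjI allI impI ballI)
    fix i j assume ij: "i \<le> j \<and> j < length H"
    have "seg H i j \<subseteq> Vp" using seg_subset[OF H] ij by blast
    then show "real_of_int (kk C d \<xi> (seg H i j)) - 1 \<le> sum z' (seg H i j)"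
      using sum_min_scaled_ge[of "seg H i j" \<sigma> z b "kk C d \<xi> (seg H i j) - 1"] cover ij \<sigma> z
        finite_subset[OF _ fin] unfolding z'_def by (auto simp: algebra_simps)
  qed (use z \<sigma> in \<open>auto simp: z'_def\<close>)
  then have "(1 - \<sigma>) * Lstar_xi Vp w b C d \<xi> H \<le> (1 - \<sigma>) * (\<Sum>v\<in>VH H. w v * z' v)"
    using Lstar_xi_le[OF H w] \<sigma> by (simp add: mult_left_mono)
  also have "\<dots> \<le> (\<Sum>v\<in>VH H. w v * z v)"
    unfolding sum_distrib_left
  proof (rule sum_mono)
    fix v assume "v \<in> VH H"
    then have "0 \<le> w v" using w VH_subset[OF H] by auto
    moreover have "(1 - \<sigma>) * z' v \<le> z v" using \<sigma> unfolding z'_def by (simp add: min_def field_simps)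
    ultimately show "(1 - \<sigma>) * (w v * z' v) \<le> w v * z v"
      by (metis mult.left_commute mult_left_mono)
  qed
  finally show ?thesis .
qed

section \<open>The dominating projected inequality\<close>

definition seg_index :: "nat set list \<Rightarrow> (nat \<times> nat) set" where
  "seg_index H = {(i, j). i \<le> j \<and> j < length H}"

lemma finite_seg_index: "finite (seg_index H)"
  by (rule finite_subset[of _ "{..<length H} \<times> {..<length H}"]) (auto simp: seg_index_def)

locale partial_route_instance =
  fixes Vp :: "nat set" and N :: nat and p :: "nat \<Rightarrow> real" and w :: "nat \<Rightarrow> real"
    and b :: "nat \<Rightarrow> nat" and C :: real and d :: "nat \<Rightarrow> nat \<Rightarrow> real" and H :: "nat set list"
  assumes fin: "finite Vp" and C_pos: "C > 0" and p_nonneg: "\<forall>\<xi>\<in>{1..N}. 0 \<le> p \<xi>"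
    and w_nonneg: "\<forall>v\<in>Vp. 0 \<le> w v"
    and routes: "\<forall>R. is_route Vp R \<longrightarrow> (\<exists>y\<in>PiR C N d R. in_box Vp N b y)"
    and H: "partial_route Vp H"
begin

abbreviation Vseg :: "nat \<times> nat \<Rightarrow> nat set" where
  "Vseg ij \<equiv> seg H (fst ij) (snd ij)"

definition demand :: "nat \<Rightarrow> nat \<times> nat \<Rightarrow> real" where
  "demand \<xi> ij = real_of_int (kk C d \<xi> (Vseg ij)) - 1"

lemma finite_VH: "finite (VH H)"
  using VH_subset[OF H] fin by (rule finite_subset)

lemma Vseg_subset_VH: "ij \<in> seg_index H \<Longrightarrow> Vseg ij \<subseteq> VH H"
  unfolding seg_index_def by (auto intro: seg_subset_VH[THEN subsetD])

lemma Vseg_in_nesubs: "ij \<in> seg_index H \<Longrightarrow> Vseg ij \<in> nesubs Vp"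
  unfolding seg_index_def by (auto intro: seg_in_nesubs[OF H])

lemma scenario_Lstar_xi_nonneg: "\<xi> \<in> {1..N} \<Longrightarrow> 0 \<le> Lstar_xi Vp w b C d \<xi> H"
  using Lstar_xi_nonneg[OF H w_nonneg scenario_feasible_b[OF fin H C_pos routes]] .

lemma Lstar_nonneg: "0 \<le> Lstar Vp N p w b C d H"
  unfolding Lstar_def using p_nonneg scenario_Lstar_xi_nonneg by (auto intro!: sum_nonneg)

lemma demand_le_cut:
  assumes "x \<in> Xsub Vp" "ij \<in> seg_index H"
  shows "demand \<xi> ij - route_slack Vp x H
    \<le> real_of_int (kk C d \<xi> (Vseg ij)) + sum x (EE Vp (Vseg ij)) - real (card (Vseg ij))"
  using seg_slack_le_route_slack[OF fin assms(1) H, of "fst ij" "snd ij"] assms(2)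
  unfolding seg_index_def demand_def by auto

lemma scenario_recourse_bound:
  assumes x: "x \<in> Xsub Vp" and \<xi>: "\<xi> \<in> {1..N}" and \<sigma>: "route_slack Vp x H < 1"
    and y: "\<forall>v\<in>Vp. 0 \<le> y v \<and> y v \<le> real (b v)"
    and cut: "\<forall>S\<in>nesubs Vp. real_of_int (kk C d \<xi> S) + sum x (EE Vp S) - real (card S) \<le> sum y S"
  shows "(1 - route_slack Vp x H) * Lstar_xi Vp w b C d \<xi> H \<le> (\<Sum>v\<in>VH H. w v * y v)"
proof (rule Lstar_xi_relaxed_le[OF fin H w_nonneg route_slack_nonneg[OF fin x H] \<sigma> y])
  show "\<forall>i j. i \<le> j \<and> j < length H \<longrightarrow>
      real_of_int (kk C d \<xi> (seg H i j)) - 1 - route_slack Vp x H \<le> sum y (seg H i j)"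
    using demand_le_cut[OF x, of "(_, _)" \<xi>] cut Vseg_in_nesubs
    unfolding demand_def seg_index_def by fastforce
qed

lemma recourse_bound_on_P:
  assumes X: "X \<subseteq> Xsub Vp" and P: "inP Vp N p w b C d X x \<theta>"
  shows "Lstar Vp N p w b C d H * W_OF Vp x H \<le> (\<Sum>v\<in>VH H. \<theta> v)"
proof -
  obtain y where x: "x \<in> Xsub Vp" and y: "in_box Vp N b y"
    and cut: "\<forall>\<xi>\<in>{1..N}. \<forall>S\<in>nesubs Vp.
      real_of_int (kk C d \<xi> S) + sum x (EE Vp S) - real (card S) \<le> sum (y \<xi>) S"
    and \<theta>: "\<forall>v\<in>Vp. 0 \<le> \<theta> v \<and> (\<Sum>\<xi>\<in>{1..N}. p \<xi> * w v * y \<xi> v) \<le> \<theta> v"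
    using P X unfolding inP_def by blast
  define \<sigma> where "\<sigma> = route_slack Vp x H"
  have W: "W_OF Vp x H = 1 - \<sigma>" unfolding \<sigma>_def by (rule W_OF_eq)
  show ?thesis
  proof (cases "\<sigma> < 1")
    case False
    then have "Lstar Vp N p w b C d H * W_OF Vp x H \<le> 0"
      unfolding W using Lstar_nonneg by (simp add: mult_nonneg_nonpos)
    also have "0 \<le> (\<Sum>v\<in>VH H. \<theta> v)" using \<theta> VH_subset[OF H] by (auto intro!: sum_nonneg)
    finally show ?thesis .
  next
    case True
    have "(1 - \<sigma>) * Lstar_xi Vp w b C d \<xi> H \<le> (\<Sum>v\<in>VH H. w v * y \<xi> v)" if \<xi>: "\<xi> \<in> {1..N}" for \<xi>
      using scenario_recourse_bound[OF x \<xi>] True cut y \<xi> unfolding \<sigma>_def in_box_def by auto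
    then have "p \<xi> * ((1 - \<sigma>) * Lstar_xi Vp w b C d \<xi> H) \<le> p \<xi> * (\<Sum>v\<in>VH H. w v * y \<xi> v)"
      if "\<xi> \<in> {1..N}" for \<xi>
      using that p_nonneg by (simp add: mult_left_mono)
    then have "Lstar Vp N p w b C d H * W_OF Vp x H
        \<le> (\<Sum>\<xi>\<in>{1..N}. p \<xi> * (\<Sum>v\<in>VH H. w v * y \<xi> v))"
      unfolding Lstar_def W sum_distrib_right by (intro sum_mono) (simp add: algebra_simps)
    also have "\<dots> = (\<Sum>v\<in>VH H. \<Sum>\<xi>\<in>{1..N}. p \<xi> * w v * y \<xi> v)"
      unfolding sum_distrib_left mult.assoc by (rule sum.swap)
    also have "\<dots> \<le> (\<Sum>v\<in>VH H. \<theta> v)"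
      using \<theta> VH_subset[OF H] by (intro sum_mono) auto
    finally show ?thesis .
  qed
qed

lemma scenario_dual_exists:
  assumes \<xi>: "\<xi> \<in> {1..N}"
  shows "\<exists>\<pi> \<mu>. covering_dual (seg_index H) (VH H) Vseg (demand \<xi>) w (\<lambda>v. real (b v))
    (Lstar_xi Vp w b C d \<xi> H) \<pi> \<mu>"
proof (rule covering_lp_duality[OF finite_seg_index finite_VH])
  fix u z assume u: "0 \<le> u" "u < 1" and z: "\<forall>v\<in>VH H. 0 \<le> z v \<and> z v \<le> real (b v)"
    and cover: "\<forall>ij\<in>seg_index H. demand \<xi> ij - u \<le> sum z (Vseg ij)"
  define z' where "z' v = (if v \<in> VH H then z v else 0)" for v
  have "sum z' (Vseg ij) = sum z (Vseg ij)" if "ij \<in> seg_index H" for ij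
    using Vseg_subset_VH[OF that] unfolding z'_def by (intro sum.cong) auto
  then have "(1 - u) * Lstar_xi Vp w b C d \<xi> H \<le> (\<Sum>v\<in>VH H. w v * z' v)"
    using cover z by (intro Lstar_xi_relaxed_le[OF fin H w_nonneg u])
      (auto simp: z'_def demand_def seg_index_def)
  then show "(1 - u) * Lstar_xi Vp w b C d \<xi> H \<le> (\<Sum>v\<in>VH H. w v * z v)"
    unfolding z'_def by simp
qed (use Vseg_subset_VH w_nonneg VH_subset[OF H] scenario_Lstar_xi_nonneg[OF \<xi>] in auto)

end

locale partial_route_duals = partial_route_instance +
  fixes \<pi> :: "nat \<Rightarrow> nat \<times> nat \<Rightarrow> real" and \<mu> :: "nat \<Rightarrow> nat \<Rightarrow> real"
  assumes duals: "\<And>\<xi>. \<xi> \<in> {1..N} \<Longrightarrow> covering_dual (seg_index H) (VH H) Vseg (demand \<xi>) w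
    (\<lambda>v. real (b v)) (Lstar_xi Vp w b C d \<xi> H) (\<pi> \<xi>) (\<mu> \<xi>)"
begin

definition alpha :: "nat \<Rightarrow> nat set \<Rightarrow> real" where
  "alpha \<xi> S = (if \<xi> \<in> {1..N} then p \<xi> * (\<Sum>ij\<in>{ij \<in> seg_index H. Vseg ij = S}. \<pi> \<xi> ij) else 0)"

definition beta :: "nat \<Rightarrow> nat \<Rightarrow> real" where
  "beta \<xi> v = (if \<xi> \<in> {1..N} \<and> v \<in> VH H then - (p \<xi> * \<mu> \<xi> v) else 0)"

lemma sum_alpha:
  assumes "\<xi> \<in> {1..N}"
  shows "(\<Sum>S\<in>nesubs Vp. alpha \<xi> S * g S) = p \<xi> * (\<Sum>ij\<in>seg_index H. \<pi> \<xi> ij * g (Vseg ij))"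
proof -
  have "(\<Sum>ij\<in>{ij \<in> seg_index H. Vseg ij = S}. \<pi> \<xi> ij) * g S
      = (\<Sum>ij\<in>{ij \<in> seg_index H. Vseg ij = S}. \<pi> \<xi> ij * g (Vseg ij))" for S
    unfolding sum_distrib_right by (rule sum.cong) auto
  then have "alpha \<xi> S * g S
      = p \<xi> * (\<Sum>ij\<in>{ij \<in> seg_index H. Vseg ij = S}. \<pi> \<xi> ij * g (Vseg ij))" for S
    unfolding alpha_def using assms by (simp add: mult.assoc)
  then have "(\<Sum>S\<in>nesubs Vp. alpha \<xi> S * g S)
      = p \<xi> * (\<Sum>S\<in>nesubs Vp. \<Sum>ij\<in>{ij \<in> seg_index H. Vseg ij = S}. \<pi> \<xi> ij * g (Vseg ij))"
    by (simp only: sum_distrib_left)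
  also have "(\<Sum>S\<in>nesubs Vp. \<Sum>ij\<in>{ij \<in> seg_index H. Vseg ij = S}. \<pi> \<xi> ij * g (Vseg ij))
      = (\<Sum>ij\<in>seg_index H. \<pi> \<xi> ij * g (Vseg ij))"
    using fin Vseg_in_nesubs by (intro sum.group finite_seg_index) (auto simp: nesubs_def)
  finally show ?thesis .
qed

lemma colsum_alpha_beta:
  assumes "\<xi> \<in> {1..N}"
  shows "colsum Vp alpha beta \<xi> v
    = p \<xi> * ((\<Sum>ij\<in>{ij \<in> seg_index H. v \<in> Vseg ij}. \<pi> \<xi> ij) - (if v \<in> VH H then \<mu> \<xi> v else 0))"
proof -
  have "finite (nesubs Vp)" using fin unfolding nesubs_def by simp
  then have "(\<Sum>S\<in>{S \<in> nesubs Vp. v \<in> S}. alpha \<xi> S)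
      = (\<Sum>S\<in>nesubs Vp. alpha \<xi> S * (if v \<in> S then 1 else 0))"
    by (simp add: sum.inter_filter[symmetric] if_distrib[of "\<lambda>a. _ * a"] cong: if_cong)
  also have "\<dots> = p \<xi> * (\<Sum>ij\<in>seg_index H. \<pi> \<xi> ij * (if v \<in> Vseg ij then 1 else 0))"
    by (rule sum_alpha[OF assms])
  also have "(\<Sum>ij\<in>seg_index H. \<pi> \<xi> ij * (if v \<in> Vseg ij then 1 else 0))
      = (\<Sum>ij\<in>{ij \<in> seg_index H. v \<in> Vseg ij}. \<pi> \<xi> ij)"
    by (simp add: sum.inter_filter[OF finite_seg_index, symmetric] if_distrib[of "\<lambda>a. _ * a"]
        cong: if_cong)
  finally show ?thesis unfolding colsum_def beta_def using assms by (simp add: algebra_simps)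
qed

lemma colsum_alpha_beta_le:
  assumes \<xi>: "\<xi> \<in> {1..N}"
  shows "colsum Vp alpha beta \<xi> v \<le> p \<xi> * (if v \<in> VH H then w v else 0)"
proof (cases "v \<in> VH H")
  case True
  then show ?thesis
    using duals[OF \<xi>] p_nonneg \<xi> unfolding colsum_alpha_beta[OF \<xi>] covering_dual_def
    by (simp add: mult_left_mono)
next
  case False
  then have "{ij \<in> seg_index H. v \<in> Vseg ij} = {}" using Vseg_subset_VH by blast
  then show ?thesis using False by (simp only: colsum_alpha_beta[OF \<xi>] sum.empty if_False) simp
qed

lemma inA_alpha_beta: "inA Vp N w alpha beta"
  unfolding inA_def
proof (intro conjI ballI impI)
  fix \<xi> S assume \<xi>: "\<xi> \<in> {1..N}"
  then have "0 \<le> (\<Sum>ij\<in>{ij \<in> seg_index H. Vseg ij = S}. \<pi> \<xi> ij)"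
    using duals[OF \<xi>] unfolding covering_dual_def by (intro sum_nonneg) auto
  then show "0 \<le> alpha \<xi> S" using \<xi> p_nonneg unfolding alpha_def by simp
next
  fix \<xi> v assume "\<xi> \<in> {1..N}"
  then show "beta \<xi> v \<le> 0"
    using duals p_nonneg unfolding beta_def covering_dual_def by auto
next
  fix \<xi> v assume "\<xi> \<in> {1..N}" "w v = 0"
  then show "colsum Vp alpha beta \<xi> v \<le> 0"
    using colsum_alpha_beta_le[of \<xi> v] by (cases "v \<in> VH H") simp_all
qed

lemma phi_alpha_beta_le:
  assumes N: "{1..N} \<noteq> {}" and w: "w v > 0"
  shows "phi Vp N p w alpha beta v \<le> (if v \<in> VH H then 1 else 0)"
proof -
  have "colsum Vp alpha beta \<xi> v / (p \<xi> * w v) \<le> (if v \<in> VH H then 1 else 0)"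
    if \<xi>: "\<xi> \<in> {1..N}" for \<xi>
  proof (cases "p \<xi> = 0")
    case False
    then have "p \<xi> * w v > 0" using p_nonneg \<xi> w by (simp add: order_le_neq_trans)
    then show ?thesis
      using colsum_alpha_beta_le[OF \<xi>, of v] by (simp add: divide_le_eq split: if_splits)
  qed simp
  then show ?thesis unfolding phi_def using N by (simp add: Max_le_iff)
qed

lemma sum_beta: "\<xi> \<in> {1..N} \<Longrightarrow>
    (\<Sum>v\<in>Vp. beta \<xi> v * real (b v)) = - p \<xi> * (\<Sum>v\<in>VH H. real (b v) * \<mu> \<xi> v)"
proof -
  assume \<xi>: "\<xi> \<in> {1..N}"
  have "(\<Sum>v\<in>Vp. beta \<xi> v * real (b v))
      = (\<Sum>v\<in>Vp. if v \<in> VH H then - p \<xi> * (real (b v) * \<mu> \<xi> v) else 0)"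
    using \<xi> unfolding beta_def by (intro sum.cong) auto
  also have "\<dots> = (\<Sum>v\<in>VH H. - p \<xi> * (real (b v) * \<mu> \<xi> v))"
    unfolding sum.inter_restrict[OF fin, symmetric] Int_absorb1[OF VH_subset[OF H]] ..
  finally show ?thesis by (simp add: sum_distrib_left)
qed

text \<open>The dual constraint \<open>\<Sum> \<pi> \<le> L\<^sup>*\<^sub>\<xi>\<close> is what lets the deficit \<open>route_slack\<close> of each cut
  be charged against the factor \<open>W\<^sub>O\<^sub>F = 1 - route_slack\<close>.\<close>
lemma Lstar_W_OF_le_cut:
  assumes x: "x \<in> Xsub Vp"
  shows "Lstar Vp N p w b C d H * W_OF Vp x H
    \<le> (\<Sum>\<xi>\<in>{1..N}. \<Sum>S\<in>nesubs Vp. alpha \<xi> S * sum x (EE Vp S)) + nu Vp N b C d alpha beta"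
proof -
  define \<sigma> where "\<sigma> = route_slack Vp x H"
  have \<sigma>: "0 \<le> \<sigma>" unfolding \<sigma>_def by (rule route_slack_nonneg[OF fin x H])
  define cut where "cut \<xi> S = sum x (EE Vp S) + (real_of_int (kk C d \<xi> S) - real (card S))" for \<xi> S
  have "p \<xi> * ((1 - \<sigma>) * Lstar_xi Vp w b C d \<xi> H)
      \<le> (\<Sum>S\<in>nesubs Vp. alpha \<xi> S * cut \<xi> S) + (\<Sum>v\<in>Vp. beta \<xi> v * real (b v))"
    if \<xi>: "\<xi> \<in> {1..N}" for \<xi>
  proof -
    let ?L = "Lstar_xi Vp w b C d \<xi> H" and ?B = "\<Sum>v\<in>VH H. real (b v) * \<mu> \<xi> v"
    have dual: "\<forall>ij\<in>seg_index H. 0 \<le> \<pi> \<xi> ij"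
      "?L \<le> (\<Sum>ij\<in>seg_index H. demand \<xi> ij * \<pi> \<xi> ij) - ?B" "sum (\<pi> \<xi>) (seg_index H) \<le> ?L"
      using duals[OF \<xi>] unfolding covering_dual_def by auto
    have "(1 - \<sigma>) * ?L \<le> (\<Sum>ij\<in>seg_index H. \<pi> \<xi> ij * (demand \<xi> ij - \<sigma>)) - ?B"
      using dual(2) mult_left_mono[OF dual(3) \<sigma>]
      by (simp add: algebra_simps sum_subtractf sum_distrib_left)
    also have "\<dots> \<le> (\<Sum>ij\<in>seg_index H. \<pi> \<xi> ij * cut \<xi> (Vseg ij)) - ?B"
      using dual(1) demand_le_cut[OF x, of _ \<xi>] unfolding cut_def \<sigma>_def
      by (intro diff_right_mono sum_mono mult_left_mono) (auto simp: algebra_simps)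
    finally have "p \<xi> * ((1 - \<sigma>) * ?L) \<le> p \<xi> * ((\<Sum>ij\<in>seg_index H. \<pi> \<xi> ij * cut \<xi> (Vseg ij)) - ?B)"
      using p_nonneg \<xi> by (simp add: mult_left_mono)
    then show ?thesis unfolding sum_alpha[OF \<xi>] sum_beta[OF \<xi>] by (simp add: algebra_simps)
  qed
  then have "(\<Sum>\<xi>\<in>{1..N}. p \<xi> * ((1 - \<sigma>) * Lstar_xi Vp w b C d \<xi> H))
      \<le> (\<Sum>\<xi>\<in>{1..N}. (\<Sum>S\<in>nesubs Vp. alpha \<xi> S * cut \<xi> S) + (\<Sum>v\<in>Vp. beta \<xi> v * real (b v)))"
    by (rule sum_mono)
  moreover have "Lstar Vp N p w b C d H * W_OF Vp x H
      = (\<Sum>\<xi>\<in>{1..N}. p \<xi> * ((1 - \<sigma>) * Lstar_xi Vp w b C d \<xi> H))"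
    unfolding Lstar_def W_OF_eq \<sigma>_def[symmetric] sum_distrib_right by (rule sum.cong) simp_all
  moreover have "(\<Sum>\<xi>\<in>{1..N}. \<Sum>S\<in>nesubs Vp. alpha \<xi> S * sum x (EE Vp S)) + nu Vp N b C d alpha beta
      = (\<Sum>\<xi>\<in>{1..N}. (\<Sum>S\<in>nesubs Vp. alpha \<xi> S * cut \<xi> S) + (\<Sum>v\<in>Vp. beta \<xi> v * real (b v)))"
    unfolding nu_def cut_def by (simp add: sum.distrib distrib_left)
  ultimately show ?thesis by simp
qed

lemma projected_cut_dominates:
  assumes N: "{1..N} \<noteq> {}" and x: "x \<in> Xsub Vp" and \<theta>: "\<forall>v\<in>Vp. 0 \<le> \<theta> v"
    and cut: "proj_ineq Vp N p w b C d alpha beta x \<theta>"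
  shows "Lstar Vp N p w b C d H * W_OF Vp x H \<le> (\<Sum>v\<in>VH H. \<theta> v)"
proof -
  have "Lstar Vp N p w b C d H * W_OF Vp x H
      \<le> (\<Sum>v\<in>{v\<in>Vp. w v > 0}. phi Vp N p w alpha beta v * \<theta> v)"
    using Lstar_W_OF_le_cut[OF x] cut unfolding proj_ineq_def by linarith
  also have "\<dots> \<le> (\<Sum>v\<in>{v\<in>Vp. w v > 0}. if v \<in> VH H then \<theta> v else 0)"
  proof (rule sum_mono)
    fix v assume "v \<in> {v \<in> Vp. w v > 0}"
    then have "phi Vp N p w alpha beta v * \<theta> v \<le> (if v \<in> VH H then 1 else 0) * \<theta> v"
      using phi_alpha_beta_le[OF N] \<theta> by (intro mult_right_mono) auto
    then show "phi Vp N p w alpha beta v * \<theta> v \<le> (if v \<in> VH H then \<theta> v else 0)"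
      by (cases "v \<in> VH H") simp_all
  qed
  also have "\<dots> \<le> (\<Sum>v\<in>VH H. \<theta> v)"
  proof -
    have pos: "finite {v \<in> Vp. w v > 0}" using fin by simp
    show ?thesis
      unfolding sum.inter_restrict[OF pos, symmetric] using \<theta> VH_subset[OF H]
      by (intro sum_mono2 finite_VH) auto
  qed
  finally show ?thesis .
qed

end

lemma (in partial_route_instance) exists_dominating_projected_cut:
  assumes N: "{1..N} \<noteq> {}" and X: "X \<subseteq> Xsub Vp"
  shows "\<exists>\<alpha> \<beta>. inA Vp N w \<alpha> \<beta> \<and>
    (\<forall>x\<in>X. \<forall>\<theta> :: nat \<Rightarrow> real. (\<forall>v\<in>Vp. 0 \<le> \<theta> v) \<longrightarrow>
       proj_ineq Vp N p w b C d \<alpha> \<beta> x \<theta> \<longrightarrow>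
       (\<Sum>v\<in>VH H. \<theta> v) \<ge> Lstar Vp N p w b C d H * W_OF Vp x H)"
proof -
  obtain \<pi> \<mu> where "\<And>\<xi>. \<xi> \<in> {1..N} \<Longrightarrow> covering_dual (seg_index H) (VH H) Vseg (demand \<xi>) w
      (\<lambda>v. real (b v)) (Lstar_xi Vp w b C d \<xi> H) (\<pi> \<xi>) (\<mu> \<xi>)"
    using scenario_dual_exists by metis
  then interpret partial_route_duals Vp N p w b C d H \<pi> \<mu> by unfold_locales
  show ?thesis using inA_alpha_beta projected_cut_dominates N X by blast
qed

theorem theorem5:
  fixes Vp :: "nat set" and N :: nat and p :: "nat \<Rightarrow> real" and d :: "nat \<Rightarrow> nat \<Rightarrow> real"
    and C :: real and w :: "nat \<Rightarrow> real" and b :: "nat \<Rightarrow> nat" and k :: nat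
    and X :: "(nat set \<Rightarrow> real) set" and H :: "nat set list"
  assumes fin: "finite Vp" and depot: "0 \<notin> Vp"
    and Cpos: "C > 0"
    and dem: "\<forall>\<xi>\<in>{1..N}. \<forall>v\<in>Vp. d \<xi> v \<in> \<rat> \<and> 0 \<le> d \<xi> v \<and> d \<xi> v \<le> C"
    and prob: "\<forall>\<xi>\<in>{1..N}. 0 \<le> p \<xi>" "(\<Sum>\<xi>\<in>{1..N}. p \<xi>) = 1"
    and wts: "\<forall>v\<in>Vp. w v \<in> \<rat> \<and> 0 \<le> w v"
    and routes: "\<forall>R. is_route Vp R \<longrightarrow> (\<exists>y\<in>PiR C N d R. in_box Vp N b y)"
    and Xchoice: "X = Xsub Vp \<or> X = Xcvrp Vp N p d C k"
    and H: "partial_route Vp H"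
  shows "(\<exists>\<alpha> \<beta>. inA Vp N w \<alpha> \<beta> \<and>
            (\<forall>x\<in>X. \<forall>\<theta> :: nat \<Rightarrow> real. (\<forall>v\<in>Vp. 0 \<le> \<theta> v) \<longrightarrow>
               proj_ineq Vp N p w b C d \<alpha> \<beta> x \<theta> \<longrightarrow>
               (\<Sum>v\<in>VH H. \<theta> v) \<ge> Lstar Vp N p w b C d H * W_OF Vp x H))
       \<and> (\<forall>x \<theta>. inP Vp N p w b C d X x \<theta> \<longrightarrow>
               (\<Sum>v\<in>VH H. \<theta> v) \<ge> Lstar Vp N p w b C d H * W_OF Vp x H)"
proof -
  interpret partial_route_instance Vp N p w b C d H
    using fin Cpos prob(1) wts routes H by unfold_locales auto
  have X: "X \<subseteq> Xsub Vp" using Xchoice unfolding Xcvrp_def by auto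
  have N: "{1..N} \<noteq> {}" using prob(2) by (metis sum.empty zero_neq_one)
  show ?thesis using exists_dominating_projected_cut[OF N X] recourse_bound_on_P[OF X] by blast
qed

end
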